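(* Fix $\beta\in(1,2)$, let $Y$ be the stationary random walk described in the context, and let $\mathcal C=\{2,4,6,\dots\}$ be the set of even positive integers. Then $\mathbf P[Y_0\in\mathcal C]=1/4$ and, as $t\to\infty$, $$\mathbf P[Y_t\in\mathcal C\mid Y_0\in\mathcal C]=\tfrac14+t^{\frac{1-\beta}{2}+o(1)},$$ while $\mathbf P[Y_s\in\mathcal C\ \forall s\in\{0,\dots,t\}]$ decays exponentially in $t$.
   Context: The graph has vertex set $\mathbb Z^*=\mathbb Z\setminus\{0\}$ and edges: nearest-neighbour edges $\{n,n+1\}$ and $\{-(n+1),-n\}$ for $n\ge1$, the edge $\{-1,1\}$, and a self-loop at every vertex. Conductances: $c_{n,n+1}=c_{-(n+1),-n}=n^{-\beta}$ for $n\ge1$; $c_{-1,1}=c_{1,1}=c_{-1,-1}=1/2$; and for $|n|\ge2$ the self-loop conductance is $c_{n,n}=c_{n,n-1}+c_{n,n+1}$. The discrete-time walk moves from $x$ to $y$ with probability $c_{x,y}/\pi(x)$, where $\pi(x)=\sum_y c_{x,y}$ (self-loop counted once); it is run in stationarity (started from normalized $\pi$), with law $\mathbf P$. (With these conductances, $\mathbf P[Y_{t+1}\in 2\mathbb Z\mid Y_t]=1/2$ regardless of $Y_t$.) *)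

theory Defs
  imports "HOL-Analysis.Analysis"
begin

text \<open>Vertex set Z* = Z minus 0, encoded inside int; vertex 0 has all conductances 0.\<close>

definition cond :: "real \<Rightarrow> int \<Rightarrow> int \<Rightarrow> real" where
  "cond \<beta> x y =
     (if x = 0 \<or> y = 0 then 0
      else if (x = -1 \<and> y = 1) \<or> (x = 1 \<and> y = -1) then 1/2
      else if x = y then
        (if \<bar>x\<bar> = 1 then 1/2
         else real_of_int (\<bar>x\<bar> - 1) powr (-\<beta>) + real_of_int \<bar>x\<bar> powr (-\<beta>))
      else if \<bar>x - y\<bar> = 1 \<and> (x > 0 \<longleftrightarrow> y > 0)
        then real_of_int (min \<bar>x\<bar> \<bar>y\<bar>) powr (-\<beta>)
      else 0)"

definition piw :: "real \<Rightarrow> int \<Rightarrow> real" where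
  "piw \<beta> x = (\<Sum>\<^sub>\<infinity>y\<in>UNIV. cond \<beta> x y)"

definition trans :: "real \<Rightarrow> int \<Rightarrow> int \<Rightarrow> real" where
  "trans \<beta> x y = (if x = 0 then 0 else cond \<beta> x y / piw \<beta> x)"

definition mu :: "real \<Rightarrow> int \<Rightarrow> real" where
  "mu \<beta> x = piw \<beta> x / (\<Sum>\<^sub>\<infinity>z\<in>UNIV - {0}. piw \<beta> z)"

definition evenPos :: "int set" where
  "evenPos = {n. n > 0 \<and> even n}"

text \<open>hitC t x = P[Y_t in A | Y_0 = x].\<close>
fun hitP :: "real \<Rightarrow> int set \<Rightarrow> nat \<Rightarrow> int \<Rightarrow> real" where
  "hitP \<beta> A 0 x = (if x \<in> A then 1 else 0)"
| "hitP \<beta> A (Suc t) x = (\<Sum>\<^sub>\<infinity>y\<in>UNIV. trans \<beta> x y * hitP \<beta> A t y)"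

text \<open>stayP t x = P[Y_s in A for all s in {0..t} | Y_0 = x].\<close>
fun stayP :: "real \<Rightarrow> int set \<Rightarrow> nat \<Rightarrow> int \<Rightarrow> real" where
  "stayP \<beta> A 0 x = (if x \<in> A then 1 else 0)"
| "stayP \<beta> A (Suc t) x =
     (if x \<in> A then (\<Sum>\<^sub>\<infinity>y\<in>UNIV. trans \<beta> x y * stayP \<beta> A t y) else 0)"

definition probY0 :: "real \<Rightarrow> int set \<Rightarrow> real" where
  "probY0 \<beta> A = (\<Sum>\<^sub>\<infinity>x\<in>A - {0}. mu \<beta> x)"

definition probCond :: "real \<Rightarrow> int set \<Rightarrow> nat \<Rightarrow> real" where
  "probCond \<beta> A t = (\<Sum>\<^sub>\<infinity>x\<in>A - {0}. mu \<beta> x * hitP \<beta> A t x) / probY0 \<beta> A"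

definition probStay :: "real \<Rightarrow> int set \<Rightarrow> nat \<Rightarrow> real" where
  "probStay \<beta> A t = (\<Sum>\<^sub>\<infinity>x\<in>A - {0}. mu \<beta> x * stayP \<beta> A t x)"

end

theory Submission
  imports Defs
begin

text \<open>
  The walk commutes with \<open>x \<mapsto> -x\<close> and from every vertex it lands in \<open>2\<int>\<close> with
  probability 1/2. Hence \<open>P[Y(t+1) \<in> C | Y(0) = x] = 1/4 + sgn x s\<^sub>t(|x|) / 4\<close>, where
  \<open>s\<^sub>t = Q\<^sup>t 1\<close> and \<open>Q\<close> is the sub-Markov operator on \<open>{1,2,...}\<close> of the antisymmetrised
  walk; the excess of the conditional probability over 1/4 is the \<open>\<pi>\<close>-mass
  \<open>\<langle>1, s\<^sub>t\<rangle>\<close>. By reversibility \<open>\<langle>1, s\<^sub>2\<^sub>k\<rangle> = \<langle>s\<^sub>k, s\<^sub>k\<rangle> =: E\<^sub>k\<close>, and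
  \<open>E\<^sub>k - E\<^sub>k\<^sub>+\<^sub>1\<close> dominates the Dirichlet energy of \<open>s\<^sub>k\<close>. Since \<open>\<pi>[n,\<infinity>)\<close> is of order
  \<open>n\<^sup>1\<^sup>-\<^sup>\<beta>\<close>, a Nash inequality turns this into \<open>E\<^sub>k\<^sub>+\<^sub>1 \<le> E\<^sub>k - c E\<^sub>k\<^sup>q\<close> with
  \<open>q = 1 + 2/(\<beta>-1)\<close>, whence \<open>E\<^sub>k = O(k\<^sup>(\<^sup>1\<^sup>-\<^sup>\<beta>\<^sup>)\<^sup>/\<^sup>2)\<close>.

  For the lower bound, \<open>\<langle>1, s\<^sub>2\<^sub>j\<rangle> \<ge> \<langle>Q\<^sup>j f, Q\<^sup>j f\<rangle>\<close> for a trapezoid \<open>0 \<le> f \<le> 1\<close>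
  supported in \<open>[M, 4M]\<close> with \<open>M\<close> of order \<open>\<surd>j\<close>. The norms \<open>\<langle>Q\<^sup>i f, Q\<^sup>i f\<rangle>\<close> are
  convex in \<open>i\<close>, so after \<open>j\<close> steps they lose at most \<open>j\<close> times the first decrement, which is
  twice the Dirichlet energy of \<open>f\<close>, of order \<open>M\<^sup>-\<^sup>1\<^sup>-\<^sup>\<beta>\<close>, against
  \<open>\<langle>f, f\<rangle> \<asymp> M\<^sup>1\<^sup>-\<^sup>\<beta>\<close>.

  Staying in \<open>C\<close> during \<open>t\<close> steps has probability \<open>2\<^sup>-\<^sup>t / 4\<close>.
\<close>

section \<open>Elementary estimates\<close>

lemma mvt_powr:
  fixes r x y :: real
  assumes "0 < y" "y < x"
  shows "\<exists>z. y < z \<and> z < x \<and> x powr r - y powr r = (x - y) * (r * z powr (r - 1))"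
proof -
  have "\<And>t. y \<le> t \<Longrightarrow> t \<le> x \<Longrightarrow> ((\<lambda>z. z powr r) has_real_derivative r * t powr (r - 1)) (at t)"
    using assms by (intro has_real_derivative_powr) auto
  from MVT2[OF assms(2) this] show ?thesis by blast
qed

lemma powr_convex_increment:
  fixes p x y :: real
  assumes "p > 1" "0 < y" "y \<le> x"
  shows "y powr (1-p) - x powr (1-p) \<ge> (p-1) * x powr (-p) * (x-y)"
proof (cases "y = x")
  case True thus ?thesis by simp
next
  case False
  hence yx: "y < x" using assms by simp
  obtain z where z: "y < z" "z < x"
    "x powr (1-p) - y powr (1-p) = (x - y) * ((1-p) * z powr (1 - p - 1))"
    using mvt_powr[OF assms(2) yx] by blast
  have e: "1 - p - 1 = -p" by simp
  have "x powr (-p) \<le> z powr (-p)" using z assms by (intro powr_mono2') auto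
  hence "(p-1) * x powr (-p) * (x-y) \<le> (p-1) * z powr (-p) * (x-y)"
    using assms yx by (intro mult_right_mono mult_left_mono) auto
  also have "\<dots> = y powr (1-p) - x powr (1-p)" using z(3) unfolding e by (simp add: algebra_simps)
  finally show ?thesis .
qed

text \<open>Comparison with the ODE \<open>a' = -c a\<^sup>p\<close>: the quantity \<open>a\<^sup>1\<^sup>-\<^sup>p\<close> grows at least linearly.\<close>

lemma polynomial_decay_of_recursion:
  fixes a :: "nat \<Rightarrow> real" and c p :: real
  assumes pos: "\<And>k. a k > 0" and c: "c > 0" and p: "p > 1"
    and step: "\<And>k. a (Suc k) \<le> a k - c * a k powr p" and k: "k \<ge> 1"
  shows "a k \<le> (c * (p-1) * real k) powr (-1/(p-1))"
proof -
  have inc: "a (Suc k) powr (1-p) \<ge> a k powr (1-p) + c * (p-1)" for k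
  proof -
    have le: "a (Suc k) \<le> a k"
      using step[of k] pos[of k] c by (smt (verit) powr_gt_zero mult_pos_pos)
    have "a (Suc k) powr (1-p) - a k powr (1-p) \<ge> (p-1) * a k powr (-p) * (a k - a (Suc k))"
      using powr_convex_increment[OF p pos le] .
    moreover have "a k - a (Suc k) \<ge> c * a k powr p" using step[of k] by simp
    hence "(p-1) * a k powr (-p) * (a k - a (Suc k)) \<ge> (p-1) * a k powr (-p) * (c * a k powr p)"
      using p by (intro mult_left_mono) auto
    moreover have "a k powr (-p) * a k powr p = 1"
      using pos[of k] by (simp add: powr_add[symmetric])
    ultimately show ?thesis by (simp add: algebra_simps)
  qed
  have lb: "a k powr (1-p) \<ge> c * (p-1) * real k" for k
  proof (induction k)
    case 0 thus ?case by simp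
  next
    case (Suc k) thus ?case using inc[of k] by (simp add: algebra_simps)
  qed
  have "(a k powr (1-p)) powr (-1/(p-1)) \<le> (c * (p-1) * real k) powr (-1/(p-1))"
    using lb[of k] k c p by (intro powr_mono2') auto
  moreover have "(1-p) * (-1/(p-1)) = 1" using p by (simp add: field_simps)
  hence "(a k powr (1-p)) powr (-1/(p-1)) = a k" using pos[of k] by (simp add: powr_powr)
  ultimately show ?thesis by simp
qed

lemma powr_le_mult_powr:
  fixes c e x y :: real
  assumes "0 < x" "x \<le> c * y" "1 \<le> c" "-1 \<le> e" "e \<le> 0"
  shows "y powr e \<le> c * x powr e"
proof -
  have "x / c \<le> y" "0 < x / c" using assms by (auto simp: field_simps)
  hence "y powr e \<le> (x / c) powr e" using assms by (intro powr_mono2') auto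
  also have "\<dots> = x powr e * c powr (-e)" using assms by (simp add: powr_divide powr_minus_divide)
  also have "c powr (-e) \<le> c powr 1" using assms by (intro powr_mono) auto
  hence "x powr e * c powr (-e) \<le> x powr e * c" using assms by (intro mult_left_mono) auto
  finally show ?thesis by (simp add: mult.commute)
qed

lemma nat_sqrt_scale:
  fixes j :: nat
  assumes "j \<ge> 1"
  obtains M :: nat where "M \<ge> 1" "54 * real j \<le> (real M)\<^sup>2" "real M \<le> 10 * sqrt (real j)"
proof
  define M where "M = nat (ceiling (sqrt (54 * real j))) + 1"
  show "M \<ge> 1" by (simp add: M_def)
  have "sqrt (54 * real j) \<le> real M" unfolding M_def by linarith
  hence "(sqrt (54 * real j))\<^sup>2 \<le> (real M)\<^sup>2" by (intro power_mono) auto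
  thus "54 * real j \<le> (real M)\<^sup>2" by simp
  have "real M \<le> sqrt 54 * sqrt (real j) + 2" unfolding M_def by (simp add: real_sqrt_mult) linarith
  moreover have "sqrt (54::real) \<le> 8" by (rule real_le_lsqrt) auto
  hence "sqrt 54 * sqrt (real j) \<le> 8 * sqrt (real j)" by (intro mult_right_mono) auto
  moreover have "1 \<le> sqrt (real j)" using assms by simp
  ultimately show "real M \<le> 10 * sqrt (real j)" by linarith
qed

lemma convex_sequence_ge_linear:
  fixes b :: "nat \<Rightarrow> real"
  assumes "\<And>i. i < j \<Longrightarrow> b i - 2 * b (Suc i) + b (Suc (Suc i)) \<ge> 0"
  shows "b j \<ge> b 0 - real j * (b 0 - b 1)"
proof -
  have decrement: "b i - b (Suc i) \<le> b 0 - b 1" if "i \<le> j" for i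
    using that
  proof (induction i)
    case (Suc i)
    hence "0 \<le> b i - 2 * b (Suc i) + b (Suc (Suc i))" using assms by simp
    thus ?case using Suc by linarith
  qed simp
  have "b i \<ge> b 0 - real i * (b 0 - b 1)" if "i \<le> j" for i
    using that
  proof (induction i)
    case (Suc i) thus ?case using decrement[of i] by (simp add: algebra_simps)
  qed simp
  thus ?thesis by simp
qed

lemma clamp_lipschitz:
  fixes a a' c c' d :: real
  assumes "\<bar>a' - a\<bar> \<le> d" "\<bar>c' - c\<bar> \<le> d"
  shows "\<bar>max 0 (min 1 (min a' c')) - max 0 (min 1 (min a c))\<bar> \<le> d"
  using assms by (simp add: max_def min_def abs_le_iff split: if_splits)

lemma infsum_finite_support:
  "finite S \<Longrightarrow> (\<And>y. y \<notin> S \<Longrightarrow> f y = 0) \<Longrightarrow> infsum f UNIV = sum f S"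
  by (subst infsum_cong_neutral[where T = S and g = f]) auto

lemma infsum_divide_const:
  fixes f :: "'a \<Rightarrow> real"
  shows "infsum (\<lambda>x. f x / c) A = infsum f A / c"
  using infsum_cmult_left'[of f "inverse c" A] by (simp add: divide_inverse)

lemma tendsto_const_plus_over_ln: "((\<lambda>t. e + c / ln (real t)) \<longlongrightarrow> e) sequentially"
proof -
  have "filterlim (\<lambda>t. ln (real t)) at_top sequentially"
    by (rule filterlim_compose[OF ln_at_top filterlim_real_sequentially])
  hence "((\<lambda>t. c / ln (real t)) \<longlongrightarrow> 0) sequentially"
    by (intro tendsto_divide_0[OF tendsto_const] filterlim_at_top_imp_at_infinity)
  hence "((\<lambda>t. e + c / ln (real t)) \<longlongrightarrow> e + 0) sequentially" by (intro tendsto_add tendsto_const)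
  thus ?thesis by simp
qed

lemma ln_over_ln_tendsto_of_powr_bounds:
  fixes f :: "nat \<Rightarrow> real" and L U e :: real
  assumes "L > 0" "U > 0"
    and bounds: "\<forall>\<^sub>F t in sequentially. L * real t powr e \<le> f t \<and> f t \<le> U * real t powr e"
  shows "((\<lambda>t. ln (f t) / ln (real t)) \<longlongrightarrow> e) sequentially"
proof (rule tendsto_sandwich[OF _ _ tendsto_const_plus_over_ln tendsto_const_plus_over_ln])
  have ln_bound: "ln (A * real t powr e) / ln (real t) = e + ln A / ln (real t)"
    if "A > 0" "t \<ge> 2" for A t
    using that by (simp add: ln_mult ln_powr field_simps)
  have event: "\<forall>\<^sub>F t in sequentially. t \<ge> 2 \<and> L * real t powr e \<le> f t \<and> f t \<le> U * real t powr e"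
    using bounds eventually_ge_at_top[of 2] by eventually_elim simp
  show "\<forall>\<^sub>F t in sequentially. e + ln L / ln (real t) \<le> ln (f t) / ln (real t)"
    using event
  proof eventually_elim
    case (elim t)
    hence "ln (L * real t powr e) \<le> ln (f t)" using \<open>L > 0\<close> by (intro ln_mono) auto
    hence "ln (L * real t powr e) / ln (real t) \<le> ln (f t) / ln (real t)"
      using elim by (intro divide_right_mono) auto
    thus ?case using elim ln_bound[OF \<open>L > 0\<close>, of t] by simp
  qed
  show "\<forall>\<^sub>F t in sequentially. ln (f t) / ln (real t) \<le> e + ln U / ln (real t)"
    using event
  proof eventually_elim
    case (elim t)
    have "0 < L * real t powr e" using \<open>L > 0\<close> elim by simp
    hence "ln (f t) \<le> ln (U * real t powr e)" using elim by (intro ln_mono) auto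
    hence "ln (f t) / ln (real t) \<le> ln (U * real t powr e) / ln (real t)"
      using elim by (intro divide_right_mono) auto
    thus ?case using elim ln_bound[OF \<open>U > 0\<close>, of t] by simp
  qed
qed

section \<open>The antisymmetrised walk on the half-line\<close>

locale half_line_walk =
  fixes \<beta> :: real
  assumes beta_gt_1: "1 < \<beta>" and beta_lt_2: "\<beta> < 2"
begin

definition edge_c :: "nat \<Rightarrow> real" where "edge_c n = real n powr (-\<beta>)"

definition pi_nat :: "nat \<Rightarrow> real" where "pi_nat n = 2 * (edge_c (n-1) + edge_c n)"

text \<open>\<open>pi_nat n\<close> is \<open>\<pi>(n)\<close> for \<open>n \<ge> 1\<close> (note \<open>edge_c 0 = 0\<close>, so \<open>pi_nat 1 = 2\<close>). \<open>Q\<close> is the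
  walk acting on \<open>g\<close> extended to \<open>\<int>\<^sup>*\<close> by \<open>g(-n) = -g(n)\<close>: at vertex 1 the self-loop and the
  jump to \<open>-1\<close> cancel, leaving \<open>g 2 / 2\<close>. Accordingly \<open>dirichlet\<close> counts the edge \<open>{-1,1}\<close>
  through the term \<open>(u 1)\<^sup>2\<close>.\<close>

definition Q :: "(nat \<Rightarrow> real) \<Rightarrow> nat \<Rightarrow> real" where
  "Q g n = (if n \<le> 1 then g 2 / 2
     else (edge_c (n-1) * g (n-1) + (edge_c (n-1) + edge_c n) * g n + edge_c n * g (Suc n))
          / pi_nat n)"

definition surv :: "nat \<Rightarrow> nat \<Rightarrow> real" where "surv k = (Q ^^ k) (\<lambda>_. 1)"

definition pi_inner :: "nat \<Rightarrow> (nat \<Rightarrow> real) \<Rightarrow> (nat \<Rightarrow> real) \<Rightarrow> real" where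
  "pi_inner N f g = (\<Sum>n=1..N. pi_nat n * f n * g n)"

definition dirichlet :: "nat \<Rightarrow> (nat \<Rightarrow> real) \<Rightarrow> real" where
  "dirichlet N u = (u 1)\<^sup>2 + (\<Sum>k=1..<N. edge_c k * (u (Suc k) - u k)\<^sup>2)"

lemma edge_c_0[simp]: "edge_c 0 = 0" by (simp add: edge_c_def)
lemma edge_c_1[simp]: "edge_c (Suc 0) = 1" by (simp add: edge_c_def)
lemma edge_c_pos: "n \<ge> 1 \<Longrightarrow> edge_c n > 0" by (simp add: edge_c_def)
lemma edge_c_nonneg: "edge_c n \<ge> 0" by (simp add: edge_c_def)
lemma edge_c_antimono: "1 \<le> m \<Longrightarrow> m \<le> n \<Longrightarrow> edge_c n \<le> edge_c m"
  unfolding edge_c_def using beta_gt_1 by (intro powr_mono2') auto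
lemma pi_nat_pos: "n \<ge> 1 \<Longrightarrow> pi_nat n > 0"
  using edge_c_pos[of n] edge_c_nonneg[of "n-1"] by (simp add: pi_nat_def)
lemma pi_nat_nonneg: "pi_nat n \<ge> 0"
  using edge_c_nonneg[of n] edge_c_nonneg[of "n-1"] by (simp add: pi_nat_def)
lemma pi_nat_1[simp]: "pi_nat (Suc 0) = 2" by (simp add: pi_nat_def)

lemma Q_numerator:
  "n \<ge> 2 \<Longrightarrow>
   pi_nat n * Q g n = edge_c (n-1) * g (n-1) + (edge_c (n-1) + edge_c n) * g n + edge_c n * g (Suc n)"
  using pi_nat_pos[of n] by (simp add: Q_def)

lemma Q_mono:
  assumes "\<And>m. m \<ge> 1 \<Longrightarrow> f m \<le> g m" "n \<ge> 1"
  shows "Q f n \<le> Q g n"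
proof (cases "n \<le> 1")
  case True thus ?thesis using assms by (simp add: Q_def)
next
  case False
  have "edge_c (n-1) * f (n-1) + (edge_c (n-1) + edge_c n) * f n + edge_c n * f (Suc n)
     \<le> edge_c (n-1) * g (n-1) + (edge_c (n-1) + edge_c n) * g n + edge_c n * g (Suc n)"
    using False assms edge_c_nonneg[of n] edge_c_nonneg[of "n-1"]
    by (intro add_mono mult_left_mono) auto
  thus ?thesis using False pi_nat_pos[of n] by (simp add: Q_def divide_right_mono)
qed

lemma Q_nonneg: "(\<And>m. m \<ge> 1 \<Longrightarrow> f m \<ge> 0) \<Longrightarrow> n \<ge> 1 \<Longrightarrow> Q f n \<ge> 0"
  using edge_c_nonneg[of n] edge_c_nonneg[of "n-1"] pi_nat_pos[of n]
  by (auto simp: Q_def intro!: divide_nonneg_pos add_nonneg_nonneg mult_nonneg_nonneg)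

lemma Q_const: "n \<ge> 2 \<Longrightarrow> Q (\<lambda>_. c) n = c"
  using pi_nat_pos[of n] by (simp add: Q_def pi_nat_def field_simps)

lemma Q_affine: assumes "n \<ge> 2" shows "Q (\<lambda>m. c + d * f m) n = c + d * Q f n"
proof -
  have "pi_nat n > 0" using pi_nat_pos[of n] assms by simp
  thus ?thesis using assms unfolding Q_def by (simp add: pi_nat_def field_simps)
qed

lemma Q_one_le: "n \<ge> 1 \<Longrightarrow> Q (\<lambda>_. 1) n \<le> 1"
  using pi_nat_pos[of n] by (cases "n \<le> 1") (auto simp: Q_def pi_nat_def)

lemma surv_0: "surv 0 = (\<lambda>_. 1)" by (simp add: surv_def)
lemma surv_Suc: "surv (Suc k) = Q (surv k)" by (simp add: surv_def)

lemma surv_bounds: "n \<ge> 1 \<Longrightarrow> 0 \<le> surv k n \<and> surv k n \<le> 1"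
proof (induction k arbitrary: n)
  case 0 thus ?case by (simp add: surv_0)
next
  case (Suc k)
  have "Q (surv k) n \<le> Q (\<lambda>_. 1) n" using Suc by (intro Q_mono) auto
  moreover have "Q (surv k) n \<ge> 0" using Suc by (intro Q_nonneg) auto
  ultimately show ?case using Q_one_le[of n] Suc by (simp add: surv_Suc)
qed

lemma surv_beyond: "n > k \<Longrightarrow> surv k n = 1"
proof (induction k arbitrary: n)
  case 0 thus ?case by (simp add: surv_0)
next
  case (Suc k)
  have "n \<ge> 2" using Suc by auto
  have "surv k (n-1) = 1" "surv k n = 1" "surv k (Suc n) = 1" using Suc by auto
  thus ?case using \<open>n \<ge> 2\<close> pi_nat_pos[of n] by (simp add: surv_Suc Q_def pi_nat_def field_simps)
qed

lemma surv_Suc_le: "n \<ge> 1 \<Longrightarrow> surv (Suc k) n \<le> surv k n"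
proof (induction k arbitrary: n)
  case 0 thus ?case by (simp add: surv_Suc surv_0 Q_one_le)
next
  case (Suc k)
  show ?case
    unfolding surv_Suc[of "Suc k"] surv_Suc[of k] using Suc by (intro Q_mono) (auto simp: surv_Suc)
qed

lemma surv_antimono: assumes "n \<ge> 1" "k \<le> k'" shows "surv k' n \<le> surv k n"
  using assms(2)
proof (induction k' rule: dec_induct)
  case base thus ?case by simp
next
  case (step m) thus ?case using surv_Suc_le[of n m] assms(1) by linarith
qed

lemma pi_inner_Suc: "pi_inner (Suc N) f g = pi_inner N f g + pi_nat (Suc N) * f (Suc N) * g (Suc N)"
  by (simp add: pi_inner_def)

lemma pi_inner_nonneg: "(\<And>n. 1 \<le> n \<Longrightarrow> f n * g n \<ge> 0) \<Longrightarrow> pi_inner N f g \<ge> 0"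
  unfolding pi_inner_def using pi_nat_nonneg by (intro sum_nonneg) (auto simp: mult.assoc)

lemma pi_inner_mono:
  "(\<And>n. 1 \<le> n \<Longrightarrow> n \<le> N \<Longrightarrow> f n * g n \<le> f' n * g' n) \<Longrightarrow> pi_inner N f g \<le> pi_inner N f' g'"
  unfolding pi_inner_def using pi_nat_nonneg by (intro sum_mono) (auto simp: mult.assoc intro: mult_left_mono)

lemma pi_inner_cong: "(\<And>n. 1 \<le> n \<Longrightarrow> n \<le> N \<Longrightarrow> f n = f' n) \<Longrightarrow> pi_inner N f g = pi_inner N f' g"
  unfolding pi_inner_def by (intro sum.cong) auto

lemma pi_inner_half: "pi_inner N (\<lambda>_. 1/2) g = 1/2 * pi_inner N (\<lambda>_. 1) g"
  unfolding pi_inner_def by (simp add: sum_distrib_left mult.commute mult.left_commute)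

lemma pi_inner_Q_swap:
  "N \<ge> 1 \<Longrightarrow>
   pi_inner N f (Q g) - pi_inner N (Q f) g = edge_c N * (f N * g (Suc N) - f (Suc N) * g N)"
proof (induction N rule: dec_induct)
  case base thus ?case by (simp add: pi_inner_def Q_def algebra_simps numeral_2_eq_2)
next
  case (step N)
  have "pi_inner (Suc N) f (Q g) - pi_inner (Suc N) (Q f) g = (pi_inner N f (Q g) - pi_inner N (Q f) g)
     + (f (Suc N) * (pi_nat (Suc N) * Q g (Suc N)) - (pi_nat (Suc N) * Q f (Suc N)) * g (Suc N))"
    using step by (simp add: pi_inner_def algebra_simps)
  also have "\<dots> = edge_c (Suc N) * (f (Suc N) * g (Suc (Suc N)) - f (Suc (Suc N)) * g (Suc N))"
    using step Q_numerator[of "Suc N" g] Q_numerator[of "Suc N" f] unfolding step.IH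
    by (simp add: algebra_simps)
  finally show ?case .
qed

lemma pi_inner_Q_self_adjoint:
  assumes "N \<ge> 1" "f N * g (Suc N) = f (Suc N) * g N"
  shows "pi_inner N f (Q g) = pi_inner N (Q f) g"
  using pi_inner_Q_swap[OF assms(1), of f g] assms(2) by simp

lemma pi_inner_diff_square: "pi_inner N f f - 2 * pi_inner N f g + pi_inner N g g \<ge> 0"
proof -
  have "pi_inner N f f - 2 * pi_inner N f g + pi_inner N g g = (\<Sum>n=1..N. pi_nat n * (f n - g n)\<^sup>2)"
    unfolding pi_inner_def
    by (simp add: sum_subtractf sum.distrib sum_distrib_left power2_eq_square algebra_simps)
  also have "\<dots> \<ge> 0" using pi_nat_nonneg by (intro sum_nonneg mult_nonneg_nonneg) auto
  finally show ?thesis .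
qed

lemma dirichlet_identity:
  "N \<ge> 1 \<Longrightarrow>
   pi_inner N u u - pi_inner N u (Q u) = dirichlet N u - edge_c N * u N * (u (Suc N) - u N)"
proof (induction N rule: dec_induct)
  case base
  thus ?case
    by (simp add: pi_inner_def Q_def dirichlet_def algebra_simps power2_eq_square numeral_2_eq_2)
next
  case (step N)
  have e1: "pi_nat (Suc N) * Q u (Suc N)
      = edge_c N * u N + (edge_c N + edge_c (Suc N)) * u (Suc N) + edge_c (Suc N) * u (Suc (Suc N))"
    using step Q_numerator[of "Suc N" u] by simp
  have "pi_inner (Suc N) u u - pi_inner (Suc N) u (Q u) = (pi_inner N u u - pi_inner N u (Q u))
     + (pi_nat (Suc N) * u (Suc N) * u (Suc N) - u (Suc N) * (pi_nat (Suc N) * Q u (Suc N)))"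
    using step by (simp add: pi_inner_def algebra_simps)
  also have "dirichlet (Suc N) u = dirichlet N u + edge_c N * (u (Suc N) - u N)\<^sup>2"
    using step by (simp add: dirichlet_def)
  ultimately show ?case unfolding e1 step.IH
    by (simp add: pi_nat_def algebra_simps power2_eq_square)
qed

subsection \<open>Tails of the stationary measure\<close>

lemma edge_c_summable: "summable edge_c"
proof -
  have "summable (\<lambda>n. of_nat n powr (-\<beta>) :: real)"
    using beta_gt_1 by (subst summable_real_powr_iff) auto
  thus ?thesis by (simp add: edge_c_def[abs_def])
qed

lemma pi_nat_summable: "summable pi_nat"
proof -
  have "summable (\<lambda>n. edge_c (Suc n - 1))" using edge_c_summable by simp
  hence "summable (\<lambda>n. edge_c (n - 1))" by (subst (asm) summable_Suc_iff)
  thus ?thesis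
    unfolding pi_nat_def[abs_def] using edge_c_summable by (intro summable_mult summable_add) auto
qed

definition pi_total :: real where "pi_total = suminf pi_nat"
definition pi_tail :: "nat \<Rightarrow> real" where "pi_tail M = pi_total - (\<Sum>n=1..<M. pi_nat n)"

lemma sum_pi_nat_le_total: "(\<Sum>n\<in>A. pi_nat n) \<le> pi_total" if "finite A"
  unfolding pi_total_def using that pi_nat_summable pi_nat_nonneg by (intro sum_le_suminf) auto

lemma pi_total_pos: "pi_total > 0"
  using sum_pi_nat_le_total[of "{1}"] by simp

lemma pi_tail_Suc: "M \<ge> 1 \<Longrightarrow> pi_tail M = pi_nat M + pi_tail (Suc M)"
  unfolding pi_tail_def by (simp add: sum.atLeastLessThan_Suc)

lemma pi_tail_pos: "M \<ge> 1 \<Longrightarrow> pi_tail M > 0"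
proof -
  assume M: "M \<ge> 1"
  have "(\<Sum>n=1..<Suc M. pi_nat n) \<le> pi_total" by (rule sum_pi_nat_le_total) auto
  thus ?thesis using M pi_nat_pos[of M] unfolding pi_tail_def by (simp add: sum.atLeastLessThan_Suc)
qed

lemma pi_tail_split: "1 \<le> M \<Longrightarrow> M \<le> Suc N \<Longrightarrow> pi_tail M = (\<Sum>n=M..N. pi_nat n) + pi_tail (Suc N)"
proof -
  assume a: "1 \<le> M" "M \<le> Suc N"
  have "{1..<Suc N} = {1..<M} \<union> {M..N}" using a by auto
  hence "(\<Sum>n=1..<Suc N. pi_nat n) = (\<Sum>n=1..<M. pi_nat n) + (\<Sum>n=M..N. pi_nat n)"
    by (simp add: sum.union_disjoint ivl_disj_int)
  thus ?thesis unfolding pi_tail_def by simp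
qed

definition tail_primitive :: "nat \<Rightarrow> real" where "tail_primitive n = real n powr (1 - \<beta>) / (\<beta> - 1)"

lemma tail_primitive_nonneg: "tail_primitive n \<ge> 0"
  using beta_gt_1 by (simp add: tail_primitive_def)

lemma edge_c_le_primitive_diff:
  assumes "n \<ge> 2" shows "edge_c n \<le> tail_primitive (n-1) - tail_primitive n"
proof -
  have "(\<beta>-1) * real n powr (-\<beta>) * (real n - real (n-1))
      \<le> real (n-1) powr (1-\<beta>) - real n powr (1-\<beta>)"
    using assms beta_gt_1 by (intro powr_convex_increment) auto
  hence "(\<beta>-1) * edge_c n \<le> real (n-1) powr (1-\<beta>) - real n powr (1-\<beta>)"
    using assms by (simp add: edge_c_def of_nat_diff)
  thus ?thesis using beta_gt_1
    by (simp add: tail_primitive_def pos_le_divide_eq mult.commute flip: diff_divide_distrib)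
qed

lemma pi_nat_le_primitive_diff:
  assumes "n \<ge> 3" shows "pi_nat n \<le> 4 * (tail_primitive (n-2) - tail_primitive (n-1))"
proof -
  have "edge_c n \<le> edge_c (n-1)" using assms by (intro edge_c_antimono) auto
  moreover have "edge_c (n-1) \<le> tail_primitive (n-1-1) - tail_primitive (n-1)"
    using assms by (intro edge_c_le_primitive_diff) auto
  ultimately show ?thesis unfolding pi_nat_def by (simp add: numeral_2_eq_2)
qed

lemma sum_pi_nat_le_primitive_diff:
  assumes "M \<ge> 3" "N \<ge> M - 1"
  shows "(\<Sum>n=M..N. pi_nat n) \<le> 4 * (tail_primitive (M-2) - tail_primitive (N-1))"
  using assms(2)
proof (induction N rule: dec_induct)
  case base thus ?case using assms by (simp add: numeral_2_eq_2)
next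
  case (step N)
  have "(\<Sum>n=M..Suc N. pi_nat n) = (\<Sum>n=M..N. pi_nat n) + pi_nat (Suc N)"
    using step(1) assms by (simp add: sum.cl_ivl_Suc)
  moreover have "pi_nat (Suc N) \<le> 4 * (tail_primitive (Suc N - 2) - tail_primitive (Suc N - 1))"
    using step(1) assms by (intro pi_nat_le_primitive_diff) auto
  moreover have "Suc N - 2 = N - 1" by simp
  ultimately show ?case using step.IH by simp
qed

definition tail_const :: real where "tail_const = 12 / (\<beta> - 1)"

lemma tail_const_pos: "tail_const > 0" using beta_gt_1 by (simp add: tail_const_def)

lemma tail_primitive_bound:
  assumes "M \<ge> 3" shows "4 * tail_primitive (M - 2) \<le> tail_const * real M powr (1 - \<beta>)"
proof -
  have "real (M-2) powr (1-\<beta>) \<le> 3 * real M powr (1-\<beta>)"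
    using assms beta_gt_1 beta_lt_2 by (intro powr_le_mult_powr) auto
  thus ?thesis using beta_gt_1 by (simp add: tail_primitive_def tail_const_def divide_right_mono)
qed

lemma pi_tail_tendsto_0: "pi_tail \<longlonglongrightarrow> 0"
proof -
  have "pi_tail = (\<lambda>M. pi_total - (\<Sum>n<M. pi_nat n))"
    by (simp add: pi_tail_def fun_eq_iff sum_shift_lb_Suc0_0_upt pi_nat_def atLeast0LessThan)
  moreover have "(\<lambda>M. pi_total - (\<Sum>n<M. pi_nat n)) \<longlonglongrightarrow> pi_total - pi_total"
    unfolding pi_total_def using pi_nat_summable by (intro tendsto_diff tendsto_const summable_LIMSEQ)
  ultimately show ?thesis by simp
qed

lemma pi_tail_bound:
  assumes "M \<ge> 3" shows "pi_tail M \<le> tail_const * real M powr (1 - \<beta>)"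
proof (rule LIMSEQ_le_const)
  show "(\<lambda>N. tail_const * real M powr (1 - \<beta>) + pi_tail (Suc N)) \<longlonglongrightarrow> tail_const * real M powr (1 - \<beta>)"
    using tendsto_add[OF tendsto_const LIMSEQ_Suc[OF pi_tail_tendsto_0]] by simp
  have "pi_tail M \<le> tail_const * real M powr (1 - \<beta>) + pi_tail (Suc N)" if "N \<ge> M" for N
  proof -
    have "pi_tail M = (\<Sum>n=M..N. pi_nat n) + pi_tail (Suc N)"
      using assms that by (intro pi_tail_split) auto
    moreover have "(\<Sum>n=M..N. pi_nat n) \<le> 4 * (tail_primitive (M-2) - tail_primitive (N-1))"
      using assms that by (intro sum_pi_nat_le_primitive_diff) auto
    moreover have "4 * (tail_primitive (M-2) - tail_primitive (N-1))
        \<le> tail_const * real M powr (1 - \<beta>)"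
      using tail_primitive_nonneg[of "N-1"] tail_primitive_bound[OF assms] by simp
    ultimately show ?thesis by linarith
  qed
  thus "\<exists>N0. \<forall>N\<ge>N0. pi_tail M \<le> tail_const * real M powr (1 - \<beta>) + pi_tail (Suc N)" by blast
qed

subsection \<open>Nash inequality and the upper bound\<close>

lemma sum_powr_weights_le:
  assumes "n \<ge> 1" shows "1 + (\<Sum>k=1..<n. real k powr \<beta>) \<le> real n * real n powr \<beta>"
proof -
  have "(\<Sum>k=1..<n. real k powr \<beta>) \<le> (\<Sum>k=1..<n. real n powr \<beta>)"
    using beta_gt_1 by (intro sum_mono powr_mono2) auto
  moreover have "1 \<le> real n powr \<beta>" using assms beta_gt_1 by (intro ge_one_powr_ge_zero) auto
  ultimately show ?thesis using assms by (simp add: of_nat_diff algebra_simps)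
qed

text \<open>Cauchy-Schwarz applied to \<open>u n = u 1 + \<Sum>\<^sub>k\<^sub><\<^sub>n (u (k+1) - u k)\<close>, with \<open>u 1\<close> paid by the
  term \<open>(u 1)\<^sup>2\<close> of the Dirichlet form.\<close>

lemma square_le_dirichlet:
  assumes n: "1 \<le> n" "n \<le> N"
  shows "(u n)\<^sup>2 \<le> (real n * real n powr \<beta>) * dirichlet N u"
proof -
  define a where "a k = (if k = 0 then 1 else sqrt (real k powr \<beta>))" for k
  define d where "d k = (if k = 0 then u 1 else sqrt (edge_c k) * (u (Suc k) - u k))" for k
  have split: "(\<Sum>k=0..<n. f k) = f 0 + (\<Sum>k=1..<n. f k)" for f :: "nat \<Rightarrow> real"
    using n by (simp add: sum.atLeast_Suc_lessThan)
  have ad: "a k * d k = u (Suc k) - u k" if "k \<ge> 1" for k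
  proof -
    have "sqrt (real k powr \<beta>) * sqrt (edge_c k) = 1"
      using that by (simp add: edge_c_def real_sqrt_mult[symmetric] powr_add[symmetric])
    thus ?thesis using that unfolding a_def d_def by (simp add: mult.assoc[symmetric])
  qed
  have "(\<Sum>k=0..<n. a k * d k) = a 0 * d 0 + (\<Sum>k=1..<n. u (Suc k) - u k)"
    unfolding split using ad by (intro arg_cong2[where f = "(+)"] sum.cong) auto
  also have "\<dots> = u n" using n by (simp add: sum_Suc_diff' a_def d_def)
  finally have "(u n)\<^sup>2 \<le> (\<Sum>k=0..<n. (a k)\<^sup>2) * (\<Sum>k=0..<n. (d k)\<^sup>2)"
    using Cauchy_Schwarz_ineq_sum[of a d "{0..<n}"] by simp
  moreover have "(\<Sum>k=0..<n. (a k)\<^sup>2) \<le> real n * real n powr \<beta>"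
    using sum_powr_weights_le[OF n(1)] unfolding split by (simp add: a_def)
  moreover have "(\<Sum>k=0..<n. (d k)\<^sup>2) \<le> dirichlet N u"
  proof -
    have "(\<Sum>k=1..<n. (d k)\<^sup>2) = (\<Sum>k=1..<n. edge_c k * (u (Suc k) - u k)\<^sup>2)"
      using edge_c_nonneg by (intro sum.cong) (auto simp: d_def power_mult_distrib)
    also have "\<dots> \<le> (\<Sum>k=1..<N. edge_c k * (u (Suc k) - u k)\<^sup>2)"
      using n edge_c_nonneg by (intro sum_mono2) auto
    finally show ?thesis unfolding split by (simp add: d_def dirichlet_def)
  qed
  ultimately show ?thesis by (smt (verit) mult_mono sum_nonneg zero_le_power2)
qed

lemma pi_nat_times_growth:
  assumes "n \<ge> 1" shows "pi_nat n * (real n * real n powr \<beta>) \<le> 10 * real n"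
proof -
  have A: "edge_c n * real n powr \<beta> = 1" using assms by (simp add: edge_c_def powr_add[symmetric])
  have B: "edge_c (n-1) * real n powr \<beta> \<le> 4"
  proof (cases "n = 1")
    case True thus ?thesis by simp
  next
    case False
    hence n2: "n \<ge> 2" using assms by simp
    have "edge_c (n-1) * real n powr \<beta> = real n powr \<beta> / real (n-1) powr \<beta>"
      unfolding edge_c_def by (simp add: powr_minus divide_inverse mult.commute)
    also have "\<dots> = (real n / real (n-1)) powr \<beta>" by (rule powr_divide[symmetric])
    also have "\<dots> \<le> 2 powr \<beta>"
      using n2 beta_gt_1 by (intro powr_mono2) (auto simp: divide_le_eq of_nat_diff)
    also have "\<dots> \<le> 2 powr 2" using beta_lt_2 by (intro powr_mono) auto
    finally show ?thesis by simp
  qed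
  have "pi_nat n * (real n * real n powr \<beta>)
      = real n * (2 * (edge_c (n-1) * real n powr \<beta> + edge_c n * real n powr \<beta>))"
    by (simp add: pi_nat_def algebra_simps)
  also have "\<dots> \<le> real n * (2 * (4 + 1))" using A B by (intro mult_left_mono) auto
  finally show ?thesis by simp
qed

lemma nash_inequality:
  assumes u: "\<And>n. 1 \<le> n \<Longrightarrow> n \<le> N \<Longrightarrow> 0 \<le> u n \<and> u n \<le> 1" and M: "1 \<le> M" "M \<le> N"
  shows "pi_inner N u u \<le> 10 * (real M)\<^sup>2 * dirichlet N u + (\<Sum>n=M..N. pi_nat n)"
proof -
  have D0: "dirichlet N u \<ge> 0"
    unfolding dirichlet_def using edge_c_nonneg by (intro add_nonneg_nonneg sum_nonneg mult_nonneg_nonneg) auto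
  have "{1..N} = {1..<M} \<union> {M..N}" using M by auto
  hence "pi_inner N u u = (\<Sum>n=1..<M. pi_nat n * u n * u n) + (\<Sum>n=M..N. pi_nat n * u n * u n)"
    unfolding pi_inner_def by (simp add: sum.union_disjoint ivl_disj_int)
  also have "(\<Sum>n=1..<M. pi_nat n * u n * u n) \<le> (\<Sum>n=1..<M. 10 * real M * dirichlet N u)"
  proof (intro sum_mono)
    fix n assume n: "n \<in> {1..<M}"
    have "pi_nat n * u n * u n = pi_nat n * (u n)\<^sup>2" by (simp add: power2_eq_square)
    also have "\<dots> \<le> pi_nat n * ((real n * real n powr \<beta>) * dirichlet N u)"
      using n M square_le_dirichlet[of n N u] pi_nat_nonneg[of n] by (intro mult_left_mono) auto
    also have "\<dots> = (pi_nat n * (real n * real n powr \<beta>)) * dirichlet N u" by simp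
    also have "\<dots> \<le> (10 * real n) * dirichlet N u"
      using pi_nat_times_growth[of n] n D0 by (intro mult_right_mono) auto
    also have "\<dots> \<le> (10 * real M) * dirichlet N u" using n D0 by (intro mult_right_mono) auto
    finally show "pi_nat n * u n * u n \<le> 10 * real M * dirichlet N u" .
  qed
  also have "(\<Sum>n=1..<M. 10 * real M * dirichlet N u) \<le> 10 * (real M)\<^sup>2 * dirichlet N u"
    using D0 M by (simp add: power2_eq_square of_nat_diff algebra_simps mult_left_mono)
  also have "(\<Sum>n=M..N. pi_nat n * u n * u n) \<le> (\<Sum>n=M..N. pi_nat n)"
  proof (intro sum_mono)
    fix n assume n: "n \<in> {M..N}"
    have "u n * u n \<le> 1" using u[of n] n M by (simp add: mult_le_one)
    thus "pi_nat n * u n * u n \<le> pi_nat n"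
      using pi_nat_nonneg[of n] mult_left_mono[of "u n * u n" 1 "pi_nat n"]
        by (simp add: mult.assoc)
  qed
  finally show ?thesis by simp
qed

text \<open>As \<open>surv k n = 1\<close> for \<open>n > k\<close>, these are the infinite sums \<open>\<Sum>\<^sub>n \<pi>(n) (surv k n)\<^sup>2\<close> and
  \<open>\<Sum>\<^sub>m \<pi>(m) surv n m\<close>, written with a finite part and the tail of \<open>\<pi>\<close>.\<close>

definition surv_energy :: "nat \<Rightarrow> real" where
  "surv_energy k = pi_inner (Suc k) (surv k) (surv k) + pi_tail (Suc (Suc k))"

definition surv_mass :: "nat \<Rightarrow> real" where
  "surv_mass n = pi_inner (Suc n) (\<lambda>_. 1) (surv n) + pi_tail (Suc (Suc n))"

lemma surv_energy_eq:
  assumes "N \<ge> Suc k" shows "surv_energy k = pi_inner N (surv k) (surv k) + pi_tail (Suc N)"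
  using assms
proof (induction N rule: dec_induct)
  case base thus ?case by (simp add: surv_energy_def)
next
  case (step N)
  have "surv k (Suc N) = 1" using step by (intro surv_beyond) auto
  thus ?case using step pi_tail_Suc[of "Suc N"] by (simp add: pi_inner_Suc)
qed

lemma surv_mass_eq:
  assumes "N \<ge> Suc n" shows "surv_mass n = pi_inner N (\<lambda>_. 1) (surv n) + pi_tail (Suc N)"
  using assms
proof (induction N rule: dec_induct)
  case base thus ?case by (simp add: surv_mass_def)
next
  case (step N)
  have "surv n (Suc N) = 1" using step by (intro surv_beyond) auto
  thus ?case using step pi_tail_Suc[of "Suc N"] by (simp add: pi_inner_Suc)
qed

lemma surv_energy_pos: "surv_energy k > 0"
proof -
  have "pi_inner (Suc k) (surv k) (surv k) \<ge> 0" using surv_bounds by (intro pi_inner_nonneg) auto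
  thus ?thesis using pi_tail_pos[of "Suc (Suc k)"] by (simp add: surv_energy_def)
qed

lemma surv_energy_le_total: "surv_energy k \<le> pi_total"
proof -
  have "pi_inner (Suc k) (surv k) (surv k) \<le> pi_inner (Suc k) (\<lambda>_. 1) (\<lambda>_. 1)"
    using surv_bounds by (intro pi_inner_mono) (auto intro: mult_le_one)
  moreover have "pi_inner (Suc k) (\<lambda>_. 1) (\<lambda>_. 1) + pi_tail (Suc (Suc k)) = pi_total"
    unfolding pi_inner_def pi_tail_def by (simp add: atLeastLessThanSuc_atLeastAtMost)
  ultimately show ?thesis unfolding surv_energy_def by linarith
qed

lemma pi_inner_surv_shift:
  "N > i + m \<Longrightarrow> N > j + m \<Longrightarrow> pi_inner N (surv i) (surv (j + m)) = pi_inner N (surv (i + m)) (surv j)"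
proof (induction m arbitrary: i)
  case 0 thus ?case by simp
next
  case (Suc m)
  have "pi_inner N (surv i) (Q (surv (j+m))) = pi_inner N (Q (surv i)) (surv (j+m))"
    using Suc by (intro pi_inner_Q_self_adjoint) (auto simp: surv_beyond)
  thus ?case using Suc.IH[of "Suc i"] Suc.prems by (simp add: surv_Suc)
qed

lemma surv_mass_double: "surv_mass (2*k) = surv_energy k"
proof -
  have "surv_mass (2*k) = pi_inner (Suc (2*k)) (\<lambda>_. 1) (surv (2*k)) + pi_tail (Suc (Suc (2*k)))"
    by (simp add: surv_mass_def)
  also have "pi_inner (Suc (2*k)) (\<lambda>_. 1) (surv (2*k))
      = pi_inner (Suc (2*k)) (surv 0) (surv (k + k))"
    by (simp add: surv_0 mult_2)
  also have "\<dots> = pi_inner (Suc (2*k)) (surv k) (surv k)"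
    using pi_inner_surv_shift[of 0 k "Suc (2*k)" k] by simp
  also have "\<dots> + pi_tail (Suc (Suc (2*k))) = surv_energy k"
    using surv_energy_eq[of k "Suc (2*k)"] by simp
  finally show ?thesis .
qed

lemma surv_energy_Suc_le:
  assumes "N \<ge> Suc (Suc k)" shows "surv_energy (Suc k) \<le> surv_energy k - dirichlet N (surv k)"
proof -
  have N1: "N \<ge> 1" using assms by simp
  have "pi_inner N (surv (Suc k)) (surv (Suc k)) \<le> pi_inner N (surv k) (surv (Suc k))"
  proof (intro pi_inner_mono)
    fix n :: nat assume n: "1 \<le> n" "n \<le> N"
    have "surv (Suc k) n \<le> surv k n" "0 \<le> surv (Suc k) n"
      using surv_Suc_le[OF n(1)] surv_bounds[OF n(1)] by auto
    thus "surv (Suc k) n * surv (Suc k) n \<le> surv k n * surv (Suc k) n" by (intro mult_right_mono)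
  qed
  also have "pi_inner N (surv k) (surv (Suc k))
      = pi_inner N (surv k) (surv k) - dirichlet N (surv k)"
    using dirichlet_identity[OF N1, of "surv k"] assms by (simp add: surv_Suc surv_beyond)
  finally show ?thesis using surv_energy_eq[of k N] surv_energy_eq[of "Suc k" N] assms by simp
qed

lemma surv_energy_nash:
  assumes "M \<ge> 3"
  shows "surv_energy k
    \<le> 10 * (real M)\<^sup>2 * dirichlet (max M (Suc (Suc k))) (surv k) + tail_const * real M powr (1 - \<beta>)"
proof -
  define N where "N = max M (Suc (Suc k))"
  have N: "N \<ge> M" "N \<ge> Suc (Suc k)" unfolding N_def by auto
  have "pi_inner N (surv k) (surv k) \<le> 10 * (real M)\<^sup>2 * dirichlet N (surv k) + (\<Sum>n=M..N. pi_nat n)"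
    using surv_bounds assms N by (intro nash_inequality) auto
  moreover have "surv_energy k = pi_inner N (surv k) (surv k) + pi_tail (Suc N)"
    using N by (intro surv_energy_eq) auto
  moreover have "pi_tail M = (\<Sum>n=M..N. pi_nat n) + pi_tail (Suc N)"
    using N assms by (intro pi_tail_split) auto
  moreover have "pi_tail M \<le> tail_const * real M powr (1 - \<beta>)" by (rule pi_tail_bound[OF assms])
  ultimately show ?thesis unfolding N_def by linarith
qed

text \<open>\<open>nash_X0\<close> is the scale \<open>X\<close> of \<open>nash_scale\<close> at the largest energy \<open>A = pi_total\<close>;
  \<open>nash_K\<close> absorbs the rounding of \<open>X\<close> up to an integer \<open>M \<ge> 3\<close>.\<close>

definition nash_exp :: real where "nash_exp = 2 / (\<beta> - 1)"
definition nash_X0 :: real where "nash_X0 = (2 * tail_const / pi_total) powr (1 / (\<beta> - 1))"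
definition nash_K :: real where "nash_K = 1 + 4 / nash_X0"
definition nash_c :: real where "nash_c = 1 / (20 * nash_K\<^sup>2 * (2 * tail_const) powr nash_exp)"

lemma nash_X0_pos: "nash_X0 > 0" using tail_const_pos pi_total_pos by (simp add: nash_X0_def)
lemma nash_exp_pos: "nash_exp > 0" using beta_gt_1 by (simp add: nash_exp_def)
lemma nash_K_pos: "nash_K > 0"
proof -
  have "4 / nash_X0 > 0" using nash_X0_pos by simp
  thus ?thesis unfolding nash_K_def by linarith
qed
lemma nash_c_pos: "nash_c > 0"
proof -
  have "(2 * tail_const) powr nash_exp > 0" using tail_const_pos by simp
  thus ?thesis using nash_K_pos unfolding nash_c_def by simp
qed

lemma nash_scale:
  assumes A: "0 < A" "A \<le> pi_total"
  obtains M :: nat where "M \<ge> 3" "tail_const * real M powr (1 - \<beta>) \<le> A / 2"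
    "nash_c * A powr (1 + nash_exp) \<le> A / (20 * (real M)\<^sup>2)"
proof
  define X where "X = (2 * tail_const / A) powr (1 / (\<beta> - 1))"
  have X: "X > 0" using A tail_const_pos by (simp add: X_def)
  define M where "M = nat (ceiling X) + 3"
  show M3: "M \<ge> 3" by (simp add: M_def)
  have MX: "X \<le> real M" "real M \<le> X + 4" unfolding M_def using X by linarith+
  have "tail_const * real M powr (1 - \<beta>) \<le> tail_const * X powr (1 - \<beta>)"
    using MX X beta_gt_1 tail_const_pos by (intro mult_left_mono powr_mono2') auto
  also have "X powr (1 - \<beta>) = (2 * tail_const / A) powr (1 / (\<beta> - 1) * (1 - \<beta>))"
    unfolding X_def by (simp add: powr_powr)
  also have "1 / (\<beta> - 1) * (1 - \<beta>) = -1" using beta_gt_1 by (simp add: field_simps)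
  also have "(2 * tail_const / A) powr (-1) = A / (2 * tail_const)"
    using A tail_const_pos by (simp add: powr_minus)
  finally show "tail_const * real M powr (1 - \<beta>) \<le> A / 2" using tail_const_pos by simp
  have "nash_X0 \<le> X"
  proof -
    have "2 * tail_const / pi_total \<le> 2 * tail_const / A"
      using A tail_const_pos by (intro divide_left_mono) auto
    thus ?thesis
      unfolding X_def nash_X0_def using beta_gt_1 tail_const_pos pi_total_pos by (intro powr_mono2) auto
  qed
  hence "4 \<le> 4 * X / nash_X0" using nash_X0_pos by (simp add: field_simps)
  hence "real M \<le> nash_K * X" using MX unfolding nash_K_def by (simp add: algebra_simps)
  hence "(real M)\<^sup>2 \<le> nash_K\<^sup>2 * X\<^sup>2" using M3 by (simp add: power_mono flip: power_mult_distrib)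
  also have "X\<^sup>2 = (2 * tail_const) powr nash_exp / A powr nash_exp"
    using X by (simp add: X_def nash_exp_def powr_powr powr_divide flip: powr_realpow)
  finally have M2:
    "20 * (real M)\<^sup>2 \<le> 20 * (nash_K\<^sup>2 * ((2 * tail_const) powr nash_exp / A powr nash_exp))"
    by simp
  have "nash_c * A powr (1 + nash_exp)
      = A / (20 * (nash_K\<^sup>2 * ((2 * tail_const) powr nash_exp / A powr nash_exp)))"
    using A tail_const_pos nash_K_pos by (simp add: nash_c_def powr_add field_simps)
  also have "\<dots> \<le> A / (20 * (real M)\<^sup>2)"
    using M2 A M3 nash_K_pos tail_const_pos by (intro divide_left_mono mult_pos_pos) auto
  finally show "nash_c * A powr (1 + nash_exp) \<le> A / (20 * (real M)\<^sup>2)" .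
qed

lemma surv_energy_recursion:
  "surv_energy (Suc k) \<le> surv_energy k - nash_c * surv_energy k powr (1 + nash_exp)"
proof -
  define A where "A = surv_energy k"
  have A: "A > 0" "A \<le> pi_total" using surv_energy_pos surv_energy_le_total unfolding A_def by auto
  obtain M where M: "M \<ge> 3" "tail_const * real M powr (1 - \<beta>) \<le> A / 2"
    "nash_c * A powr (1 + nash_exp) \<le> A / (20 * (real M)\<^sup>2)"
    using nash_scale[OF A] by blast
  define N where "N = max M (Suc (Suc k))"
  have "A \<le> 10 * (real M)\<^sup>2 * dirichlet N (surv k) + A / 2"
    using surv_energy_nash[OF M(1), of k] M(2) unfolding A_def N_def by linarith
  hence "A / (20 * (real M)\<^sup>2) \<le> dirichlet N (surv k)" using M(1) by (simp add: field_simps)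
  moreover have "surv_energy (Suc k) \<le> A - dirichlet N (surv k)"
    unfolding A_def N_def by (intro surv_energy_Suc_le) auto
  ultimately show ?thesis using M(3) unfolding A_def by linarith
qed

lemma surv_energy_decay: "\<exists>C. \<forall>k\<ge>1. surv_energy k \<le> C * real k powr ((1 - \<beta>) / 2)"
proof -
  have e: "-1 / (1 + nash_exp - 1) = (1 - \<beta>) / 2" using beta_gt_1 by (simp add: nash_exp_def)
  have "surv_energy k \<le> (nash_c * nash_exp) powr ((1 - \<beta>) / 2) * real k powr ((1 - \<beta>) / 2)"
    if "k \<ge> 1" for k
  proof -
    have "surv_energy k \<le> (nash_c * (1 + nash_exp - 1) * real k) powr (-1 / (1 + nash_exp - 1))"
      using surv_energy_pos nash_c_pos nash_exp_pos surv_energy_recursion that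
      by (intro polynomial_decay_of_recursion) auto
    thus ?thesis unfolding e by (simp add: powr_mult)
  qed
  thus ?thesis by blast
qed

lemma surv_mass_antimono:
  assumes "m \<le> n" shows "surv_mass n \<le> surv_mass m"
proof -
  have "pi_inner (Suc n) (\<lambda>_. 1) (surv n) \<le> pi_inner (Suc n) (\<lambda>_. 1) (surv m)"
    using surv_antimono assms by (intro pi_inner_mono) auto
  thus ?thesis using surv_mass_eq[of n "Suc n"] surv_mass_eq[of m "Suc n"] assms by simp
qed

lemma surv_mass_upper: "\<exists>C. \<forall>n\<ge>2. surv_mass n \<le> C * real n powr ((1 - \<beta>) / 2)"
proof -
  obtain C where C: "\<And>k. k \<ge> 1 \<Longrightarrow> surv_energy k \<le> C * real k powr ((1 - \<beta>) / 2)"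
    using surv_energy_decay by blast
  have C0: "C \<ge> 0" using C[of 1] surv_energy_pos[of 1] by simp
  have "surv_mass n \<le> (3 * C) * real n powr ((1 - \<beta>) / 2)" if n: "n \<ge> 2" for n
  proof -
    define k where "k = n div 2"
    have k: "k \<ge> 1" "2 * k \<le> n" "n \<le> 3 * k" unfolding k_def using n by linarith+
    have "surv_mass n \<le> surv_energy k"
      using surv_mass_antimono[OF k(2)] by (simp add: surv_mass_double)
    also have "\<dots> \<le> C * real k powr ((1 - \<beta>) / 2)" using C k by simp
    also have "real k powr ((1 - \<beta>) / 2) \<le> 3 * real n powr ((1 - \<beta>) / 2)"
      using n k beta_gt_1 beta_lt_2 by (intro powr_le_mult_powr) auto
    finally show ?thesis using C0 by (simp add: mult_left_mono)
  qed
  thus ?thesis by blast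
qed

subsection \<open>Trapezoid test functions and the lower bound\<close>

definition trapezoid :: "nat \<Rightarrow> nat \<Rightarrow> real" where
  "trapezoid M n = max 0 (min 1 (min ((real n - real M) / real M) ((4 * real M - real n) / real M)))"

definition trapezoid_iter :: "nat \<Rightarrow> nat \<Rightarrow> nat \<Rightarrow> real" where
  "trapezoid_iter M i = (Q ^^ i) (trapezoid M)"

lemma trapezoid_iter_0: "trapezoid_iter M 0 = trapezoid M" by (simp add: trapezoid_iter_def)
lemma trapezoid_iter_Suc: "trapezoid_iter M (Suc i) = Q (trapezoid_iter M i)"
  by (simp add: trapezoid_iter_def)

lemma trapezoid_bounds: "0 \<le> trapezoid M n \<and> trapezoid M n \<le> 1" by (simp add: trapezoid_def)

lemma trapezoid_outside: assumes "M \<ge> 1" "n \<le> M \<or> n \<ge> 4 * M" shows "trapezoid M n = 0"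
proof -
  have Mp: "real M > 0" using assms by simp
  from assms(2) show ?thesis
  proof
    assume "n \<le> M"
    hence "(real n - real M) / real M \<le> 0" using Mp by (simp add: divide_nonpos_pos)
    thus ?thesis unfolding trapezoid_def by simp
  next
    assume "n \<ge> 4 * M"
    hence "(4 * real M - real n) / real M \<le> 0" using Mp by (simp add: divide_nonpos_pos)
    thus ?thesis unfolding trapezoid_def by simp
  qed
qed

lemma trapezoid_plateau: assumes "M \<ge> 1" "2 * M \<le> n" "n \<le> 3 * M" shows "trapezoid M n = 1"
proof -
  have Mp: "real M > 0" using assms by simp
  have "1 \<le> (real n - real M) / real M" "1 \<le> (4 * real M - real n) / real M"
    using assms Mp by (simp_all add: le_divide_eq)
  thus ?thesis unfolding trapezoid_def by simp
qed

lemma trapezoid_lipschitz: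
  assumes "M \<ge> 1" shows "\<bar>trapezoid M (Suc n) - trapezoid M n\<bar> \<le> 1 / real M"
proof -
  have Mp: "real M > 0" using assms by simp
  show ?thesis unfolding trapezoid_def
    by (rule clamp_lipschitz) (use Mp in \<open>simp_all add: diff_divide_distrib[symmetric]\<close>)
qed

lemma trapezoid_iter_beyond: "M \<ge> 1 \<Longrightarrow> n > 4 * M + i \<Longrightarrow> trapezoid_iter M i n = 0"
proof (induction i arbitrary: n)
  case 0 thus ?case by (simp add: trapezoid_iter_0 trapezoid_outside)
next
  case (Suc i)
  have "trapezoid_iter M i (n-1) = 0" "trapezoid_iter M i n = 0" "trapezoid_iter M i (Suc n) = 0"
    using Suc by auto
  moreover have "n \<ge> 2" using Suc by auto
  ultimately show ?case by (simp add: trapezoid_iter_Suc Q_def)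
qed

lemma trapezoid_iter_le_surv: "n \<ge> 1 \<Longrightarrow> 0 \<le> trapezoid_iter M i n \<and> trapezoid_iter M i n \<le> surv i n"
proof (induction i arbitrary: n)
  case 0 thus ?case using trapezoid_bounds by (simp add: trapezoid_iter_0 surv_0)
next
  case (Suc i)
  have "Q (trapezoid_iter M i) n \<le> Q (surv i) n" using Suc by (intro Q_mono) auto
  moreover have "Q (trapezoid_iter M i) n \<ge> 0" using Suc by (intro Q_nonneg) auto
  ultimately show ?case by (simp add: trapezoid_iter_Suc surv_Suc)
qed

lemma pi_inner_trapezoid_surv_shift:
  "M \<ge> 1 \<Longrightarrow> N > 4 * M + i + m + 1 \<Longrightarrow> N > j + m \<Longrightarrow>
   pi_inner N (trapezoid_iter M i) (surv (j + m)) = pi_inner N (trapezoid_iter M (i + m)) (surv j)"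
proof (induction m arbitrary: i)
  case 0 thus ?case by simp
next
  case (Suc m)
  have "trapezoid_iter M i N = 0" "trapezoid_iter M i (Suc N) = 0"
    using Suc by (auto intro!: trapezoid_iter_beyond)
  hence "pi_inner N (trapezoid_iter M i) (Q (surv (j+m)))
      = pi_inner N (Q (trapezoid_iter M i)) (surv (j+m))"
    using Suc by (intro pi_inner_Q_self_adjoint) auto
  thus ?case using Suc.IH[of "Suc i"] Suc.prems by (simp add: surv_Suc trapezoid_iter_Suc)
qed

lemma pi_inner_trapezoid_shift:
  "M \<ge> 1 \<Longrightarrow> N > 4 * M + i + m + 1 \<Longrightarrow>
   pi_inner N (trapezoid_iter M i) (trapezoid_iter M (j + m))
     = pi_inner N (trapezoid_iter M (i + m)) (trapezoid_iter M j)"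
proof (induction m arbitrary: i)
  case 0 thus ?case by simp
next
  case (Suc m)
  have "trapezoid_iter M i N = 0" "trapezoid_iter M i (Suc N) = 0"
    using Suc by (auto intro!: trapezoid_iter_beyond)
  hence "pi_inner N (trapezoid_iter M i) (Q (trapezoid_iter M (j+m)))
      = pi_inner N (Q (trapezoid_iter M i)) (trapezoid_iter M (j+m))"
    using Suc by (intro pi_inner_Q_self_adjoint) auto
  thus ?case using Suc.IH[of "Suc i"] Suc.prems by (simp add: trapezoid_iter_Suc)
qed

definition trapezoid_norm :: "nat \<Rightarrow> nat \<Rightarrow> nat \<Rightarrow> real" where
  "trapezoid_norm M N i = pi_inner N (trapezoid_iter M i) (trapezoid_iter M i)"

lemma trapezoid_norm_convex:
  assumes M: "M \<ge> 1" and N: "N > 4 * M + i + 3"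
  shows "trapezoid_norm M N i - 2 * trapezoid_norm M N (Suc i) + trapezoid_norm M N (Suc (Suc i)) \<ge> 0"
proof -
  have "pi_inner N (trapezoid_iter M i) (trapezoid_iter M (Suc i + 1))
      = pi_inner N (trapezoid_iter M (i + 1)) (trapezoid_iter M (Suc i))"
    using M N by (intro pi_inner_trapezoid_shift) auto
  thus ?thesis
    using pi_inner_diff_square[of N "trapezoid_iter M i" "trapezoid_iter M (Suc (Suc i))"]
    by (simp add: trapezoid_norm_def)
qed

lemma trapezoid_norm_lower:
  assumes "M \<ge> 1" and "N > 4 * M + j + 3"
  shows "trapezoid_norm M N j
    \<ge> trapezoid_norm M N 0 - real j * (trapezoid_norm M N 0 - trapezoid_norm M N 1)"
  using assms by (intro convex_sequence_ge_linear trapezoid_norm_convex) auto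

lemma trapezoid_norm_first_decrement:
  assumes M: "M \<ge> 1" and N: "N > 4 * M + 1"
  shows "trapezoid_norm M N 0 - trapezoid_norm M N 1 \<le> 2 * dirichlet N (trapezoid M)"
proof -
  have "trapezoid M N = 0" using M N by (intro trapezoid_outside) auto
  hence "pi_inner N (trapezoid M) (trapezoid M) - pi_inner N (trapezoid M) (Q (trapezoid M))
      = dirichlet N (trapezoid M)"
    using dirichlet_identity[of N "trapezoid M"] N by simp
  thus ?thesis using pi_inner_diff_square[of N "trapezoid M" "Q (trapezoid M)"]
    by (simp add: trapezoid_norm_def trapezoid_iter_def)
qed

lemma dirichlet_trapezoid:
  assumes "M \<ge> 1" shows "dirichlet N (trapezoid M) \<le> 3 * real M powr (-\<beta>) / real M"
proof -
  let ?c = "real M powr (-\<beta>) / (real M)\<^sup>2"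
  have Mp: "real M > 0" using assms by simp
  have bound:
    "edge_c k * (trapezoid M (Suc k) - trapezoid M k)\<^sup>2 \<le> (if M \<le> k \<and> k < 4 * M then ?c else 0)"
    if "k \<ge> 1" for k
  proof (cases "M \<le> k \<and> k < 4 * M")
    case True
    have "edge_c k \<le> edge_c M" using True assms by (intro edge_c_antimono) auto
    moreover have "(trapezoid M (Suc k) - trapezoid M k)\<^sup>2 \<le> (1 / real M)\<^sup>2"
      using trapezoid_lipschitz[OF assms, of k] by (simp add: abs_le_square_iff[symmetric])
    ultimately have "edge_c k * (trapezoid M (Suc k) - trapezoid M k)\<^sup>2 \<le> edge_c M * (1 / real M)\<^sup>2"
      using edge_c_nonneg by (intro mult_mono) auto
    thus ?thesis using True by (simp add: edge_c_def power_divide)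
  next
    case False
    hence "trapezoid M (Suc k) = 0 \<and> trapezoid M k = 0"
      using assms by (auto intro!: trapezoid_outside)
    thus ?thesis using False by simp
  qed
  have "(\<Sum>k=1..<N. edge_c k * (trapezoid M (Suc k) - trapezoid M k)\<^sup>2)
      \<le> (\<Sum>k=1..<N. (if M \<le> k \<and> k < 4 * M then ?c else 0))"
    using bound by (intro sum_mono) auto
  also have "\<dots> = (\<Sum>k\<in>{1..<N} \<inter> {M..<4*M}. ?c)"
    by (simp add: sum.If_cases Int_def conj_commute)
  also have "\<dots> \<le> (\<Sum>k=M..<4*M. ?c)" by (intro sum_mono2) auto
  also have "\<dots> = 3 * real M powr (-\<beta>) / real M" using Mp by (simp add: power2_eq_square)
  moreover have "trapezoid M 1 = 0" using assms by (intro trapezoid_outside) auto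
  ultimately show ?thesis by (simp add: dirichlet_def)
qed

lemma trapezoid_norm_0_lower:
  assumes "M \<ge> 1" "N \<ge> 3 * M" shows "trapezoid_norm M N 0 \<ge> 2/9 * real M * real M powr (-\<beta>)"
proof -
  have "(1/9::real) \<le> 3 powr (-\<beta>)"
    using beta_lt_2 powr_mono[of "-2" "-\<beta>" "3::real"] by (simp add: powr_minus)
  hence "real M * (2 * (1/9 * real M powr (-\<beta>)))
      \<le> (real M + 1) * (2 * (3 powr (-\<beta>) * real M powr (-\<beta>)))"
    by (intro mult_mono) auto
  hence "2/9 * real M * real M powr (-\<beta>) \<le> (real M + 1) * (2 * (3 powr (-\<beta>) * real M powr (-\<beta>)))"
    by simp
  also have "\<dots> = (\<Sum>n=2*M..3*M. 2 * edge_c (3 * M))"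
    using assms by (simp add: of_nat_diff edge_c_def powr_mult)
  also have "\<dots> \<le> (\<Sum>n=2*M..3*M. pi_nat n)"
  proof (intro sum_mono)
    fix n assume n: "n \<in> {2*M..3*M}"
    have "edge_c (3*M) \<le> edge_c n" using n assms by (intro edge_c_antimono) auto
    thus "2 * edge_c (3 * M) \<le> pi_nat n" using edge_c_nonneg[of "n-1"] by (simp add: pi_nat_def)
  qed
  also have "\<dots> = (\<Sum>n=2*M..3*M. pi_nat n * trapezoid M n * trapezoid M n)"
    using assms by (intro sum.cong) (auto simp: trapezoid_plateau)
  also have "\<dots> \<le> trapezoid_norm M N 0"
    unfolding trapezoid_norm_def pi_inner_def trapezoid_iter_0 using assms pi_nat_nonneg trapezoid_bounds
    by (intro sum_mono2) (auto intro!: mult_nonneg_nonneg)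
  finally show ?thesis .
qed

lemma surv_mass_ge_trapezoid:
  assumes M: "M \<ge> 1" and N: "N \<ge> 4 * M + 2 * j + 4"
  shows "pi_inner N (\<lambda>_. 1) (surv (2 * j))
    \<ge> (2/9 * real M - 6 * real j / real M) * real M powr (-\<beta>)"
proof -
  let ?norm = "trapezoid_norm M N"
  have "pi_inner N (trapezoid M) (surv (j + j)) \<le> pi_inner N (\<lambda>_. 1) (surv (2 * j))"
  proof (intro pi_inner_mono)
    fix n :: nat assume n: "1 \<le> n" "n \<le> N"
    show "trapezoid M n * surv (j + j) n \<le> 1 * surv (2 * j) n"
      using trapezoid_bounds[of M n] surv_bounds[OF n(1), of "2*j"]
        by (simp add: mult_2 mult_left_le_one_le)
  qed
  moreover have "pi_inner N (trapezoid_iter M 0) (surv (j + j))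
      = pi_inner N (trapezoid_iter M (0 + j)) (surv j)"
    by (rule pi_inner_trapezoid_surv_shift[OF M]) (use N in auto)
  hence "pi_inner N (trapezoid M) (surv (j + j)) = pi_inner N (trapezoid_iter M j) (surv j)"
    by (simp add: trapezoid_iter_0)
  moreover have "?norm j \<le> pi_inner N (trapezoid_iter M j) (surv j)"
    unfolding trapezoid_norm_def
  proof (intro pi_inner_mono)
    fix n :: nat assume n: "1 \<le> n" "n \<le> N"
    show "trapezoid_iter M j n * trapezoid_iter M j n \<le> trapezoid_iter M j n * surv j n"
      using trapezoid_iter_le_surv[OF n(1), of M j] by (simp add: mult_left_mono)
  qed
  moreover have "?norm j \<ge> ?norm 0 - real j * (?norm 0 - ?norm 1)"
    using trapezoid_norm_lower[OF M] N by simp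
  moreover have "?norm 0 - ?norm 1 \<le> 6 * real M powr (-\<beta>) / real M"
    using trapezoid_norm_first_decrement[OF M, of N] dirichlet_trapezoid[OF M, of N] N by simp
  hence "real j * (?norm 0 - ?norm 1) \<le> real j * (6 * real M powr (-\<beta>) / real M)"
    by (intro mult_left_mono) auto
  moreover have "?norm 0 \<ge> 2/9 * real M * real M powr (-\<beta>)"
    using trapezoid_norm_0_lower[OF M, of N] N by simp
  ultimately have "2/9 * real M * real M powr (-\<beta>) - real j * (6 * real M powr (-\<beta>) / real M)
      \<le> pi_inner N (\<lambda>_. 1) (surv (2 * j))"
    by linarith
  thus ?thesis by (simp add: algebra_simps)
qed

lemma surv_mass_lower_finite:
  assumes j: "j \<ge> 1"
  shows "\<exists>N0. \<forall>N\<ge>N0. pi_inner N (\<lambda>_. 1) (surv (2 * j)) \<ge> 1/90 * real j powr ((1 - \<beta>) / 2)"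
proof -
  obtain M :: nat where M: "M \<ge> 1" "54 * real j \<le> (real M)\<^sup>2" "real M \<le> 10 * sqrt (real j)"
    using nat_sqrt_scale[OF j] by blast
  have "6 * real j / real M \<le> 1/9 * real M" using M by (simp add: field_simps power2_eq_square)
  hence coeff:
    "1/9 * real M * real M powr (-\<beta>) \<le> (2/9 * real M - 6 * real j / real M) * real M powr (-\<beta>)"
    by (intro mult_right_mono) auto
  have "real M * real M powr (-\<beta>) = real M powr (1 - \<beta>)"
    using M by (simp add: powr_diff powr_minus divide_inverse)
  also have "real M powr (1 - \<beta>) \<ge> (10 * sqrt (real j)) powr (1 - \<beta>)"
    using M beta_gt_1 by (intro powr_mono2') auto
  also have "(10 * sqrt (real j)) powr (1 - \<beta>) = 10 powr (1 - \<beta>) * real j powr ((1 - \<beta>) / 2)"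
    using j by (simp add: powr_mult sqrt_def root_powr_inverse powr_powr)
  also have "10 powr (1 - \<beta>) \<ge> (10::real) powr (-1)" using beta_lt_2 by (intro powr_mono) auto
  hence "10 powr (1 - \<beta>) * real j powr ((1 - \<beta>) / 2) \<ge> 1/10 * real j powr ((1 - \<beta>) / 2)"
    by (intro mult_right_mono) (auto simp: powr_minus)
  finally have "1/90 * real j powr ((1 - \<beta>) / 2) \<le> 1/9 * real M * real M powr (-\<beta>)" by simp
  thus ?thesis using surv_mass_ge_trapezoid[OF M(1)] coeff by (meson order_trans)
qed

definition even_ind :: "nat \<Rightarrow> real" where "even_ind n = (if even n then 1 else 0)"

lemma Q_even_ind: assumes "n \<ge> 1" shows "Q even_ind n = 1/2"
proof (cases "n = 1")
  case True thus ?thesis by (simp add: Q_def even_ind_def)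
next
  case False
  hence n2: "n \<ge> 2" using assms by simp
  have pi_nat: "pi_nat n = 2 * (edge_c (n-1) + edge_c n)" by (simp add: pi_nat_def)
  have pos: "edge_c (n-1) + edge_c n > 0" using pi_nat_pos[of n] n2 by (simp add: pi_nat_def)
  show ?thesis
  proof (cases "even n")
    case True
    hence "odd (n-1)" "odd (Suc n)" using n2 by auto
    thus ?thesis using True n2 pos by (simp add: Q_def even_ind_def pi_nat)
  next
    case False
    hence "even (n-1)" "even (Suc n)" using n2 by auto
    thus ?thesis using False n2 pos by (simp add: Q_def even_ind_def pi_nat algebra_simps)
  qed
qed

text \<open>\<open>Q even_ind = 1/2\<close> is the fact that every step lands in \<open>2\<int>\<close> with probability 1/2; for even
  \<open>N\<close> the boundary term of the summation by parts is \<open>edge_c N * g (N+1) \<ge> 0\<close>.\<close>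

lemma pi_inner_even_ind_Q: assumes N: "N \<ge> 1" "even N" and g: "g (Suc N) \<ge> 0"
  shows "pi_inner N even_ind (Q g) \<ge> 1/2 * pi_inner N (\<lambda>_. 1) g"
proof -
  have "pi_inner N even_ind (Q g)
      = pi_inner N (Q even_ind) g + edge_c N * (even_ind N * g (Suc N) - even_ind (Suc N) * g N)"
    using pi_inner_Q_swap[OF N(1), of even_ind g] by simp
  also have "pi_inner N (Q even_ind) g = pi_inner N (\<lambda>_. 1/2) g"
    using Q_even_ind by (intro pi_inner_cong) auto
  also have "even_ind N * g (Suc N) - even_ind (Suc N) * g N = g (Suc N)"
    using N by (simp add: even_ind_def)
  finally show ?thesis using edge_c_nonneg[of N] g by (simp add: pi_inner_half)
qed

lemma even_surv_lower_finite:
  assumes n: "n \<ge> 2"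
  shows "\<exists>N0. \<forall>N\<ge>N0. even N \<longrightarrow> pi_inner N even_ind (surv n) \<ge> 1/180 * real n powr ((1 - \<beta>) / 2)"
proof -
  define j where "j = n div 2"
  have j1: "j \<ge> 1" using n by (simp add: j_def)
  obtain N0 where
    N0: "\<And>N. N \<ge> N0 \<Longrightarrow> pi_inner N (\<lambda>_. 1) (surv (2 * j)) \<ge> 1 / 90 * real j powr ((1 - \<beta>) / 2)"
    using surv_mass_lower_finite[OF j1] by blast
  show "\<exists>N0. \<forall>N\<ge>N0. even N \<longrightarrow> pi_inner N even_ind (surv n) \<ge> 1/180 * real n powr ((1 - \<beta>) / 2)"
  proof (intro exI[of _ "max N0 1"] allI impI)
    fix N assume N: "max N0 1 \<le> N" "even N"
    have N1: "N \<ge> 1" using N by simp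
    have sn: "surv n = Q (surv (n-1))" using n surv_Suc[of "n-1"] by simp
    have "pi_inner N even_ind (surv n) \<ge> 1/2 * pi_inner N (\<lambda>_. 1) (surv (n-1))"
      unfolding sn using surv_bounds[of "Suc N" "n-1"] by (intro pi_inner_even_ind_Q N1 N(2)) auto
    moreover have "pi_inner N (\<lambda>_. 1) (surv (n-1)) \<ge> pi_inner N (\<lambda>_. 1) (surv (2 * j))"
      using surv_antimono by (intro pi_inner_mono) (auto simp: j_def)
    moreover have "pi_inner N (\<lambda>_. 1) (surv (2 * j)) \<ge> 1 / 90 * real j powr ((1 - \<beta>) / 2)"
      using N by (intro N0) auto
    moreover have "real j powr ((1 - \<beta>) / 2) \<ge> real n powr ((1 - \<beta>) / 2)"
      using j1 beta_gt_1 by (intro powr_mono2') (auto simp: j_def)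
    ultimately show "pi_inner N even_ind (surv n) \<ge> 1/180 * real n powr ((1 - \<beta>) / 2)" by simp
  qed
qed

section \<open>Reduction of the walk on \<open>\<int>\<^sup>*\<close> to the half-line\<close>

lemma edge_c_of_int: "k \<ge> 0 \<Longrightarrow> real_of_int k powr (-\<beta>) = edge_c (nat k)"
  by (simp add: edge_c_def)

lemma cond_sym: "cond \<beta> (-x) (-y) = cond \<beta> x y"
  unfolding cond_def by (auto simp: abs_minus_commute algebra_simps)

lemma cond_up: assumes "x \<ge> 1" shows "cond \<beta> x (x+1) = edge_c (nat x)"
  using assms unfolding cond_def by (simp add: edge_c_of_int)

lemma cond_down: assumes "x \<ge> 2" shows "cond \<beta> x (x-1) = edge_c (nat x - 1)"
proof -
  have "real_of_int (x - 1) powr (-\<beta>) = edge_c (nat (x-1))"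
    using assms by (intro edge_c_of_int) auto
  moreover have "nat (x - 1) = nat x - 1" using assms by auto
  ultimately show ?thesis using assms unfolding cond_def by simp
qed

lemma cond_diag: assumes "x \<ge> 2" shows "cond \<beta> x x = edge_c (nat x - 1) + edge_c (nat x)"
proof -
  have "real_of_int (x - 1) powr (-\<beta>) = edge_c (nat (x-1))"
    using assms by (intro edge_c_of_int) auto
  moreover have "nat (x - 1) = nat x - 1" using assms by auto
  ultimately show ?thesis using assms unfolding cond_def by (simp add: edge_c_of_int)
qed

lemma cond_zero_far: assumes "x \<ge> 2" "y \<notin> {x-1, x, x+1}" shows "cond \<beta> x y = 0"
  using assms unfolding cond_def by (auto simp: abs_if split: if_splits)

lemma cond_1_zero: assumes "y \<notin> {-1, 1, 2}" shows "cond \<beta> 1 y = 0"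
  using assms unfolding cond_def by (auto simp: abs_if split: if_splits)

lemma cond_1_values: "cond \<beta> 1 1 = 1/2" "cond \<beta> 1 (-1) = 1/2" "cond \<beta> 1 2 = 1" "cond \<beta> 1 0 = 0"
proof -
  show "cond \<beta> 1 1 = 1/2" unfolding cond_def by simp
  show "cond \<beta> 1 (-1) = 1/2" unfolding cond_def by simp
  show "cond \<beta> 1 0 = 0" unfolding cond_def by simp
  have "min \<bar>1::int\<bar> \<bar>2\<bar> = 1" by simp
  thus "cond \<beta> 1 2 = 1" unfolding cond_def by simp
qed

lemma piw_pos_eq: assumes "x \<ge> 1" shows "piw \<beta> x = pi_nat (nat x)"
proof (cases "x = 1")
  case True
  have "piw \<beta> 1 = sum (cond \<beta> 1) {-1, 1, 2}"
    unfolding piw_def by (rule infsum_finite_support) (auto intro!: cond_1_zero)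
  also have "\<dots> = 2" by (simp add: cond_1_values)
  finally show ?thesis using True by simp
next
  case False
  hence x2: "x \<ge> 2" using assms by simp
  have "piw \<beta> x = sum (cond \<beta> x) {x-1, x, x+1}"
    unfolding piw_def using x2 by (intro infsum_finite_support) (auto intro!: cond_zero_far)
  also have "\<dots> = cond \<beta> x (x-1) + cond \<beta> x x + cond \<beta> x (x+1)" using x2 by simp
  also have "\<dots> = pi_nat (nat x)" using x2 by (simp add: cond_up cond_down cond_diag pi_nat_def)
  finally show ?thesis .
qed

lemma piw_sym: "piw \<beta> (-x) = piw \<beta> x"
proof -
  have "piw \<beta> (-x) = infsum (\<lambda>y. cond \<beta> (-x) y) (uminus ` UNIV)" by (simp add: piw_def)
  also have "\<dots> = infsum ((\<lambda>y. cond \<beta> (-x) y) \<circ> uminus) UNIV" by (rule infsum_reindex) auto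
  also have "\<dots> = piw \<beta> x" by (simp add: piw_def o_def cond_sym)
  finally show ?thesis .
qed

lemma piw_eq: "piw \<beta> x = pi_nat (nat \<bar>x\<bar>)"
proof -
  consider "x \<ge> 1" | "x = 0" | "x \<le> -1" by linarith
  thus ?thesis
  proof cases
    case 1 thus ?thesis by (simp add: piw_pos_eq)
  next
    case 2 thus ?thesis by (simp add: piw_def cond_def pi_nat_def)
  next
    case 3 thus ?thesis using piw_pos_eq[of "-x"] piw_sym[of "-x"] by simp
  qed
qed

lemma trans_sym: "trans \<beta> (-x) (-y) = trans \<beta> x y"
  by (simp add: trans_def piw_sym cond_sym)

lemma trans_0: "trans \<beta> 0 y = 0" by (simp add: trans_def)

lemma piw_pos: "x \<noteq> 0 \<Longrightarrow> piw \<beta> x > 0"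
  by (simp add: piw_eq pi_nat_pos)

lemma piw_nonneg: "piw \<beta> x \<ge> 0" by (simp add: piw_eq pi_nat_nonneg)

lemma trans_sum_pos:
  assumes x: "x \<ge> 1"
    and gp: "\<And>y. y > 0 \<Longrightarrow> g y = u (nat y)" and gn: "\<And>y. y < 0 \<Longrightarrow> g y = v (nat (-y))"
  shows "infsum (\<lambda>y. trans \<beta> x y * g y) UNIV
    = (if x = 1 then (v 1 + u 1 + 2 * u 2) / 4 else Q u (nat x))"
proof (cases "x = 1")
  case True
  have p1: "piw \<beta> 1 = 2" using piw_pos_eq[of 1] by simp
  have "infsum (\<lambda>y. trans \<beta> 1 y * g y) UNIV = sum (\<lambda>y. trans \<beta> 1 y * g y) {-1, 1, 2}"
    by (rule infsum_finite_support) (auto simp: trans_def cond_1_zero)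
  also have "\<dots> = (v 1 + u 1 + 2 * u 2) / 4"
    using gp[of 1] gp[of 2] gn[of "-1"] by (simp add: trans_def p1 cond_1_values)
  finally show ?thesis using True by simp
next
  case False
  hence x2: "x \<ge> 2" using x by simp
  define a where "a = nat x"
  have a2: "a \<ge> 2" using x2 by (simp add: a_def)
  have px: "piw \<beta> x = pi_nat a" using x by (simp add: piw_pos_eq a_def)
  have "infsum (\<lambda>y. trans \<beta> x y * g y) UNIV = sum (\<lambda>y. trans \<beta> x y * g y) {x-1, x, x+1}"
    using x2 by (intro infsum_finite_support) (auto simp: trans_def cond_zero_far)
  also have "\<dots> = trans \<beta> x (x-1) * g (x-1) + trans \<beta> x x * g x + trans \<beta> x (x+1) * g (x+1)"
    using x2 by simp
  also have "g (x-1) = u (a-1)" using x2 gp[of "x-1"] by (simp add: a_def nat_diff_distrib)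
  also have "g x = u a" using x2 gp[of x] by (simp add: a_def)
  also have "g (x+1) = u (Suc a)" using x2 gp[of "x+1"] by (simp add: a_def nat_add_distrib)
  also have "trans \<beta> x (x-1) * u (a - 1) + trans \<beta> x x * u a + trans \<beta> x (x + 1) * u (Suc a)
      = Q u a"
    using x2 a2 pi_nat_pos[of a] unfolding trans_def Q_def
    by (simp add: px cond_up cond_down cond_diag a_def[symmetric] add_divide_distrib;
        simp add: field_simps)
  finally show ?thesis using False by (simp add: a_def)
qed

lemma trans_sum_neg:
  assumes x: "x \<le> -1"
    and gp: "\<And>y. y > 0 \<Longrightarrow> g y = u (nat y)" and gn: "\<And>y. y < 0 \<Longrightarrow> g y = v (nat (-y))"
  shows "infsum (\<lambda>y. trans \<beta> x y * g y) UNIV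
    = (if x = -1 then (u 1 + v 1 + 2 * v 2) / 4 else Q v (nat (-x)))"
proof -
  have "infsum (\<lambda>y. trans \<beta> x y * g y) UNIV = infsum (\<lambda>y. trans \<beta> x y * g y) (uminus ` UNIV)"
    by simp
  also have "\<dots> = infsum ((\<lambda>y. trans \<beta> x y * g y) \<circ> uminus) UNIV" by (rule infsum_reindex) auto
  also have "\<dots> = infsum (\<lambda>y. trans \<beta> (-x) y * g (-y)) UNIV"
    using trans_sym[of "-x"] by (simp add: o_def)
  also have "\<dots> = (if -x = 1 then (u 1 + v 1 + 2 * v 2) / 4 else Q v (nat (-x)))"
    using x gp gn by (intro trans_sum_pos) auto
  finally show ?thesis by (auto split: if_splits)
qed

definition odd_ext :: "real \<Rightarrow> real \<Rightarrow> (nat \<Rightarrow> real) \<Rightarrow> int \<Rightarrow> real" where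
  "odd_ext c d f x =
     (if x > 0 then c + d * f (nat x) else if x < 0 then c - d * f (nat (-x)) else 0)"

lemma trans_sum_odd_ext:
  "infsum (\<lambda>y. trans \<beta> x y * odd_ext c d f y) UNIV = odd_ext c d (Q f) x"
proof -
  let ?u = "\<lambda>n. c + d * f n" and ?v = "\<lambda>n. c + (-d) * f n"
  have gp: "odd_ext c d f y = ?u (nat y)" if "y > 0" for y using that by (simp add: odd_ext_def)
  have gn: "odd_ext c d f y = ?v (nat (-y))" if "y < 0" for y using that by (simp add: odd_ext_def)
  consider "x = 1" | "x \<ge> 2" | "x = -1" | "x \<le> -2" | "x = 0" by linarith
  thus ?thesis
  proof cases
    case 1
    thus ?thesis using trans_sum_pos[of x _ ?u ?v, OF _ gp gn] by (simp add: odd_ext_def Q_def)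
  next
    case 2
    thus ?thesis using trans_sum_pos[of x _ ?u ?v, OF _ gp gn] Q_affine[of "nat x" c d f]
      by (simp add: odd_ext_def)
  next
    case 3
    thus ?thesis using trans_sum_neg[of x _ ?u ?v, OF _ gp gn] by (simp add: odd_ext_def Q_def)
  next
    case 4
    thus ?thesis using trans_sum_neg[of x _ ?u ?v, OF _ gp gn] Q_affine[of "nat (-x)" c "-d" f]
      by (simp add: odd_ext_def)
  next
    case 5 thus ?thesis by (simp add: odd_ext_def trans_0)
  qed
qed

lemma hitP_1: "hitP \<beta> evenPos (Suc 0) x = odd_ext (1/4) (1/4) (surv 0) x"
proof -
  have g: "hitP \<beta> evenPos 0 y = even_ind (nat y)" if "y > 0" for y
    using that by (auto simp: evenPos_def even_ind_def even_nat_iff)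
  have h: "hitP \<beta> evenPos 0 y = (\<lambda>_. 0) (nat (-y))" if "y < 0" for y
    using that by (simp add: evenPos_def)
  consider "x = 1" | "x \<ge> 2" | "x = -1" | "x \<le> -2" | "x = 0" by linarith
  thus ?thesis
  proof cases
    case 2 thus ?thesis
      using trans_sum_pos[of x _ even_ind, OF _ g h] Q_even_ind[of "nat x"]
        by (simp add: odd_ext_def surv_0)
  next
    case 4 thus ?thesis
      using trans_sum_neg[of x _ even_ind, OF _ g h] Q_const[of "nat (-x)" 0]
        by (simp add: odd_ext_def surv_0)
  qed (use trans_sum_pos[of x _ even_ind, OF _ g h] trans_sum_neg[of x _ even_ind, OF _ g h] in
      \<open>auto simp: odd_ext_def surv_0 even_ind_def trans_0\<close>)
qed

lemma hitP_eq: "hitP \<beta> evenPos (Suc t) x = odd_ext (1/4) (1/4) (surv t) x"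
proof (induction t arbitrary: x)
  case 0 show ?case by (rule hitP_1)
next
  case (Suc t)
  thus ?case using trans_sum_odd_ext[of x "1/4" "1/4" "surv t"] by (simp add: surv_Suc)
qed

lemma stayP_outside: "y \<notin> evenPos \<Longrightarrow> stayP \<beta> evenPos t y = 0"
  by (cases t) auto

lemma stayP_eq: "x \<in> evenPos \<Longrightarrow> stayP \<beta> evenPos t x = (1/2) ^ t"
proof (induction t arbitrary: x)
  case 0 thus ?case by simp
next
  case (Suc t)
  have x2: "x \<ge> 2" using Suc.prems by (auto simp: evenPos_def)
  define u where "u n = 0 + (1/2)^t * even_ind n" for n
  have gp: "stayP \<beta> evenPos t y = u (nat y)" if "y > 0" for y
  proof (cases "y \<in> evenPos")
    case True thus ?thesis using Suc.IH by (simp add: u_def even_ind_def evenPos_def even_nat_iff)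
  next
    case False
    thus ?thesis using that stayP_outside by (simp add: u_def even_ind_def evenPos_def even_nat_iff)
  qed
  have gn: "stayP \<beta> evenPos t y = (\<lambda>_. 0) (nat (-y))" if "y < 0" for y
    using that stayP_outside by (simp add: evenPos_def)
  have "stayP \<beta> evenPos (Suc t) x = infsum (\<lambda>y. trans \<beta> x y * stayP \<beta> evenPos t y) UNIV"
    using Suc.prems by simp
  also have "\<dots> = Q u (nat x)" using trans_sum_pos[of x "stayP \<beta> evenPos t" u, OF _ gp gn] x2 by simp
  also have "\<dots> = 0 + (1/2)^t * Q even_ind (nat x)" unfolding u_def using x2 by (intro Q_affine) auto
  also have "Q even_ind (nat x) = 1/2" using x2 by (intro Q_even_ind) auto
  finally show ?case by simp
qed

subsection \<open>The stationary law\<close>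

lemma sum_piw_le_total:
  assumes "finite G" "inj_on (\<lambda>x. nat \<bar>x\<bar>) G"
  shows "sum (piw \<beta>) G \<le> pi_total"
proof -
  have "sum (piw \<beta>) G = sum pi_nat ((\<lambda>x. nat \<bar>x\<bar>) ` G)"
    using sum.reindex[OF assms(2), of pi_nat] by (simp add: o_def piw_eq)
  also have "\<dots> \<le> pi_total" using assms by (intro sum_pi_nat_le_total) auto
  finally show ?thesis .
qed

lemma piw_summable_on: "piw \<beta> summable_on A"
proof (rule nonneg_bdd_above_summable_on)
  show "bdd_above (sum (piw \<beta>) ` {F. F \<subseteq> A \<and> finite F})"
  proof (rule bdd_aboveI)
    fix s assume "s \<in> sum (piw \<beta>) ` {F. F \<subseteq> A \<and> finite F}"
    then obtain F where F: "finite F" "s = sum (piw \<beta>) F" by auto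
    let ?P = "F \<inter> {x. x > 0}" and ?N = "F \<inter> {x. x \<le> 0}"
    have "sum (piw \<beta>) F = sum (piw \<beta>) ?P + sum (piw \<beta>) ?N"
      using F by (subst sum.union_disjoint[symmetric]) (auto intro: sum.cong)
    moreover have "sum (piw \<beta>) ?P \<le> pi_total" "sum (piw \<beta>) ?N \<le> pi_total"
      using F by (auto intro!: sum_piw_le_total simp: inj_on_def)
    ultimately show "s \<le> 2 * pi_total" using F by simp
  qed
qed (rule piw_nonneg)

definition pi_norm :: real where "pi_norm = infsum (piw \<beta>) (UNIV - {0})"

definition oddPos :: "int set" where "oddPos = {x. x > 0 \<and> odd x}"

lemma edge_c_summable_on: "(\<lambda>x. edge_c (nat x)) summable_on {x. x \<ge> 0}"
  by (rule summable_on_comparison_test[OF piw_summable_on])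
    (use edge_c_nonneg in \<open>auto simp: piw_eq pi_nat_def\<close>)

lemma edge_c_pred_summable_on: "(\<lambda>x. edge_c (nat x - 1)) summable_on {x. x > 0}"
  by (rule summable_on_comparison_test[OF piw_summable_on])
    (use edge_c_nonneg in \<open>auto simp: piw_eq pi_nat_def\<close>)

lemma infsum_piw_split:
  assumes "A \<subseteq> {x. x > 0}"
  shows "infsum (piw \<beta>) A
    = 2 * infsum (\<lambda>x. edge_c (nat x - 1)) A + 2 * infsum (\<lambda>x. edge_c (nat x)) A"
proof -
  have s1: "(\<lambda>x. edge_c (nat x - 1)) summable_on A"
    using assms by (rule summable_on_subset[OF edge_c_pred_summable_on])
  have s2: "(\<lambda>x. edge_c (nat x)) summable_on A"
    using assms by (intro summable_on_subset[OF edge_c_summable_on]) auto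
  have "infsum (piw \<beta>) A = infsum (\<lambda>x. 2 * edge_c (nat x - 1) + 2 * edge_c (nat x)) A"
    using assms by (intro infsum_cong) (auto simp: piw_eq pi_nat_def)
  also have "\<dots> = infsum (\<lambda>x. 2 * edge_c (nat x - 1)) A + infsum (\<lambda>x. 2 * edge_c (nat x)) A"
    using s1 s2 by (intro infsum_add summable_on_cmult_right)
  also have "\<dots> = 2 * infsum (\<lambda>x. edge_c (nat x - 1)) A + 2 * infsum (\<lambda>x. edge_c (nat x)) A"
    using s1 s2 by (simp add: infsum_cmult_right)
  finally show ?thesis .
qed

lemma infsum_edge_c_shift: assumes "B \<subseteq> {x. x \<ge> 0}"
  shows "infsum (\<lambda>x. edge_c (nat x - 1)) ((\<lambda>y. y + 1) ` B) = infsum (\<lambda>y. edge_c (nat y)) B"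
proof -
  have "infsum (\<lambda>x. edge_c (nat x - 1)) ((\<lambda>y. y + 1) ` B)
      = infsum ((\<lambda>x. edge_c (nat x - 1)) \<circ> (\<lambda>y. y + 1)) B"
    by (rule infsum_reindex) auto
  also have "\<dots> = infsum (\<lambda>y. edge_c (nat y)) B"
    using assms by (intro infsum_cong) (auto simp: nat_add_distrib)
  finally show ?thesis .
qed

lemma evenPos_shift: "evenPos = (\<lambda>y. y + 1) ` oddPos"
  unfolding evenPos_def oddPos_def
  by (rule set_eqI, rule iffI) (force simp: image_iff intro: exI[of _ "_ - 1"], auto)

lemma oddPos_shift: "oddPos = (\<lambda>y. y + 1) ` {z. z \<ge> 0 \<and> even z}"
  unfolding oddPos_def
  by (rule set_eqI, rule iffI) (force simp: image_iff intro: exI[of _ "_ - 1"], auto)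

text \<open>Each edge \<open>{n, n+1}\<close> joins an even and an odd vertex, and \<open>\<pi>(n)\<close> is twice the sum of the
  conductances of the edges at \<open>n\<close>.\<close>

lemma infsum_piw_oddPos: "infsum (piw \<beta>) oddPos = infsum (piw \<beta>) evenPos"
proof -
  have e1: "infsum (\<lambda>x. edge_c (nat x - 1)) evenPos = infsum (\<lambda>y. edge_c (nat y)) oddPos"
    unfolding evenPos_shift by (rule infsum_edge_c_shift) (auto simp: oddPos_def)
  have e2: "infsum (\<lambda>x. edge_c (nat x - 1)) oddPos
      = infsum (\<lambda>y. edge_c (nat y)) {z. z \<ge> 0 \<and> even z}"
    by (subst oddPos_shift) (rule infsum_edge_c_shift, auto)
  have e3: "infsum (\<lambda>y. edge_c (nat y)) {z. z \<ge> 0 \<and> even z} = infsum (\<lambda>y. edge_c (nat y)) evenPos"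
    by (rule infsum_cong_neutral) (auto simp: evenPos_def)
  have "infsum (piw \<beta>) oddPos
      = 2 * infsum (\<lambda>x. edge_c (nat x - 1)) oddPos + 2 * infsum (\<lambda>x. edge_c (nat x)) oddPos"
    by (rule infsum_piw_split) (auto simp: oddPos_def)
  moreover have "infsum (piw \<beta>) evenPos
      = 2 * infsum (\<lambda>x. edge_c (nat x - 1)) evenPos + 2 * infsum (\<lambda>x. edge_c (nat x)) evenPos"
    by (rule infsum_piw_split) (auto simp: evenPos_def)
  ultimately show ?thesis using e1 e2 e3 by simp
qed

lemma pi_norm_eq: "pi_norm = 4 * infsum (piw \<beta>) evenPos"
proof -
  define Pos where "Pos = {x::int. x > 0}"
  have U: "UNIV - {0} = Pos \<union> uminus ` Pos" unfolding Pos_def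
    by (auto simp: image_iff) (metis minus_minus neg_less_0_iff_less linorder_neqE_linordered_idom)
  have "pi_norm = infsum (piw \<beta>) Pos + infsum (piw \<beta>) (uminus ` Pos)"
    unfolding pi_norm_def U by (intro infsum_Un_disjoint) (auto simp: piw_summable_on Pos_def)
  also have "infsum (piw \<beta>) (uminus ` Pos) = infsum (piw \<beta>) Pos"
    using infsum_reindex[of uminus Pos "piw \<beta>"] by (simp add: o_def piw_sym)
  also have "Pos = evenPos \<union> oddPos" by (auto simp: Pos_def evenPos_def oddPos_def)
  also have "infsum (piw \<beta>) (evenPos \<union> oddPos) = infsum (piw \<beta>) evenPos + infsum (piw \<beta>) oddPos"
    by (rule infsum_Un_disjoint) (auto simp: piw_summable_on evenPos_def oddPos_def)
  finally show ?thesis using infsum_piw_oddPos by simp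
qed

lemma infsum_piw_evenPos_pos: "infsum (piw \<beta>) evenPos > 0"
proof -
  have "sum (piw \<beta>) {2} \<le> infsum (piw \<beta>) evenPos"
    by (rule finite_sum_le_infsum) (auto simp: piw_summable_on evenPos_def piw_nonneg)
  moreover have "piw \<beta> 2 > 0" by (rule piw_pos) simp
  ultimately show ?thesis by simp
qed

lemma pi_norm_pos: "pi_norm > 0" using infsum_piw_evenPos_pos pi_norm_eq by simp

lemma mu_eq: "mu \<beta> x = piw \<beta> x / pi_norm" by (simp add: mu_def pi_norm_def)

lemma probY0_eq: "probY0 \<beta> evenPos = 1/4"
proof -
  have "evenPos - {0} = evenPos" by (auto simp: evenPos_def)
  hence "probY0 \<beta> evenPos = infsum (\<lambda>x. piw \<beta> x / pi_norm) evenPos" by (simp add: probY0_def mu_eq)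
  also have "\<dots> = infsum (piw \<beta>) evenPos / pi_norm" by (rule infsum_divide_const)
  finally show ?thesis using pi_norm_eq infsum_piw_evenPos_pos by simp
qed

lemma even_surv_summable_on: "(\<lambda>x. piw \<beta> x * surv n (nat x)) summable_on evenPos"
proof (rule summable_on_comparison_test[OF piw_summable_on])
  fix x assume "x \<in> evenPos"
  hence "0 \<le> surv n (nat x)" "surv n (nat x) \<le> 1"
    using surv_bounds[of "nat x" n] by (auto simp: evenPos_def)
  thus "0 \<le> piw \<beta> x * surv n (nat x)" "piw \<beta> x * surv n (nat x) \<le> piw \<beta> x"
    using piw_nonneg[of x] mult_left_le[of "surv n (nat x)" "piw \<beta> x"] by simp_all
qed

definition even_surv_mass :: "nat \<Rightarrow> real" where
  "even_surv_mass n = infsum (\<lambda>x. piw \<beta> x * surv n (nat x)) evenPos"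

lemma probCond_eq: "probCond \<beta> evenPos (Suc n) = 1/4 + even_surv_mass n / pi_norm"
proof -
  have "infsum (\<lambda>x. mu \<beta> x * hitP \<beta> evenPos (Suc n) x) evenPos
      = infsum (\<lambda>x. (piw \<beta> x + piw \<beta> x * surv n (nat x)) / (4 * pi_norm)) evenPos"
    unfolding hitP_eq by (intro infsum_cong) (simp add: odd_ext_def evenPos_def mu_eq field_simps)
  also have "\<dots> = (infsum (piw \<beta>) evenPos + even_surv_mass n) / (4 * pi_norm)"
    unfolding infsum_divide_const even_surv_mass_def
    using piw_summable_on even_surv_summable_on by (simp add: infsum_add)
  finally have "infsum (\<lambda>x. mu \<beta> x * hitP \<beta> evenPos (Suc n) x) evenPos
      = (pi_norm / 4 + even_surv_mass n) / (4 * pi_norm)"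
    by (simp add: pi_norm_eq)
  moreover have "evenPos - {0} = evenPos" by (auto simp: evenPos_def)
  ultimately show ?thesis using pi_norm_pos by (simp add: probCond_def probY0_eq field_simps)
qed

lemma even_surv_mass_le: "even_surv_mass n \<le> surv_mass n"
  unfolding even_surv_mass_def
proof (rule infsum_le_finite_sums[OF even_surv_summable_on])
  fix F assume F: "finite F" "F \<subseteq> evenPos"
  define N where "N = Suc n + (\<Sum>y\<in>F. nat y)"
  have inj: "inj_on nat F" using F by (auto simp: inj_on_def evenPos_def)
  have sub: "nat ` F \<subseteq> {1..N}"
  proof
    fix a assume "a \<in> nat ` F"
    then obtain y where y: "y \<in> F" "a = nat y" by auto
    have "nat y \<le> (\<Sum>y\<in>F. nat y)" using F y by (intro member_le_sum) auto
    moreover have "nat y \<ge> 1" using F y by (auto simp: evenPos_def)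
    ultimately show "a \<in> {1..N}" using y by (simp add: N_def)
  qed
  have "(\<Sum>x\<in>F. piw \<beta> x * surv n (nat x)) = (\<Sum>a\<in>nat ` F. pi_nat a * surv n a)"
  proof -
    have "(\<Sum>a\<in>nat ` F. pi_nat a * surv n a) = (\<Sum>x\<in>F. pi_nat (nat x) * surv n (nat x))"
      using sum.reindex[OF inj, of "\<lambda>a. pi_nat a * surv n a"] by simp
    also have "\<dots> = (\<Sum>x\<in>F. piw \<beta> x * surv n (nat x))"
      using F by (intro sum.cong) (auto simp: piw_eq evenPos_def)
    finally show ?thesis by simp
  qed
  also have "\<dots> \<le> (\<Sum>a\<in>{1..N}. pi_nat a * surv n a)"
    using sub pi_nat_nonneg surv_bounds by (intro sum_mono2) (auto intro!: mult_nonneg_nonneg)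
  also have "\<dots> = pi_inner N (\<lambda>_. 1) (surv n)" by (simp add: pi_inner_def)
  also have "\<dots> \<le> surv_mass n"
    using surv_mass_eq[of n N] pi_tail_pos[of "Suc N"] by (simp add: N_def)
  finally show "(\<Sum>x\<in>F. piw \<beta> x * surv n (nat x)) \<le> surv_mass n" .
qed

lemma pi_inner_even_le_even_surv_mass: "pi_inner N even_ind (surv n) \<le> even_surv_mass n"
proof -
  define A where "A = {a \<in> {1..N}. even a}"
  have "pi_inner N even_ind (surv n) = (\<Sum>a\<in>{1..N}. if even a then pi_nat a * surv n a else 0)"
    unfolding pi_inner_def by (intro sum.cong) (auto simp: even_ind_def)
  also have "\<dots> = (\<Sum>a\<in>A. pi_nat a * surv n a)"
    unfolding A_def by (rule sum.inter_filter[symmetric]) simp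
  also have "\<dots> = (\<Sum>x\<in>int ` A. piw \<beta> x * surv n (nat x))"
  proof -
    have "(\<Sum>x\<in>int ` A. piw \<beta> x * surv n (nat x)) = (\<Sum>a\<in>A. piw \<beta> (int a) * surv n (nat (int a)))"
      by (rule sum.reindex_cong[of int]) (auto simp: inj_on_def)
    also have "\<dots> = (\<Sum>a\<in>A. pi_nat a * surv n a)" by (simp add: piw_eq)
    finally show ?thesis by simp
  qed
  also have "\<dots> \<le> even_surv_mass n" unfolding even_surv_mass_def
  proof (rule finite_sum_le_infsum[OF even_surv_summable_on])
    show "finite (int ` A)" by (simp add: A_def)
    show "int ` A \<subseteq> evenPos" by (auto simp: A_def evenPos_def even_of_nat)
    fix x assume "x \<in> evenPos - int ` A"
    hence "nat x \<ge> 1" by (auto simp: evenPos_def)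
    thus "piw \<beta> x * surv n (nat x) \<ge> 0"
      using surv_bounds piw_nonneg by (auto intro: mult_nonneg_nonneg)
  qed
  finally show ?thesis .
qed

lemma probStay_eq: "probStay \<beta> evenPos t = (1/2)^t / 4"
proof -
  have E0: "evenPos - {0} = evenPos" by (auto simp: evenPos_def)
  have "probStay \<beta> evenPos t = infsum (\<lambda>x. piw \<beta> x / (pi_norm / (1/2)^t)) evenPos"
    unfolding probStay_def E0 by (intro infsum_cong) (simp add: mu_eq stayP_eq)
  also have "\<dots> = infsum (piw \<beta>) evenPos / (pi_norm / (1/2)^t)" by (rule infsum_divide_const)
  finally show ?thesis using pi_norm_eq infsum_piw_evenPos_pos by simp
qed

lemma probStay_le_exp: "probStay \<beta> evenPos t \<le> exp (- ln 2 * real t)"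
proof -
  have "exp (- ln 2 * real t) = exp (- ln 2) ^ t" by (simp add: mult.commute flip: exp_of_nat_mult)
  also have "\<dots> = (1/2) ^ t" by (simp add: exp_minus)
  finally show ?thesis by (simp add: probStay_eq)
qed

lemma even_surv_mass_lower:
  assumes "n \<ge> 2" shows "1/180 * real n powr ((1 - \<beta>) / 2) \<le> even_surv_mass n"
proof -
  obtain N0 where "\<forall>N\<ge>N0. even N \<longrightarrow> pi_inner N even_ind (surv n) \<ge> 1/180 * real n powr ((1 - \<beta>) / 2)"
    using even_surv_lower_finite[OF assms] by blast
  hence "pi_inner (2 * N0) even_ind (surv n) \<ge> 1/180 * real n powr ((1 - \<beta>) / 2)" by simp
  thus ?thesis using pi_inner_even_le_even_surv_mass[of "2 * N0" n] by linarith
qed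

lemma probCond_excess_powr_bounds:
  "\<exists>L U. L > 0 \<and> U > 0 \<and> (\<forall>\<^sub>F t in sequentially.
     L * real t powr ((1 - \<beta>) / 2) \<le> probCond \<beta> evenPos t - 1/4 \<and>
     probCond \<beta> evenPos t - 1/4 \<le> U * real t powr ((1 - \<beta>) / 2))"
proof -
  define e where "e = (1 - \<beta>) / 2"
  have e: "-1 \<le> e" "e \<le> 0" using beta_gt_1 beta_lt_2 by (auto simp: e_def)
  obtain C where C: "\<And>n. n \<ge> 2 \<Longrightarrow> even_surv_mass n \<le> C * real n powr e"
    using surv_mass_upper even_surv_mass_le unfolding e_def by (meson order_trans)
  have low: "1/180 * real n powr e \<le> even_surv_mass n" if "n \<ge> 2" for n
    using even_surv_mass_lower[OF that] unfolding e_def .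
  have "1/180 * real 2 powr e \<le> C * real 2 powr e" using C[of 2] low[of 2] by linarith
  hence C0: "C > 0" by (simp add: mult_le_cancel_right_pos)
  have "1/180 / pi_norm * real t powr e \<le> probCond \<beta> evenPos t - 1/4 \<and>
        probCond \<beta> evenPos t - 1/4 \<le> 2 * C / pi_norm * real t powr e" if t: "t \<ge> 3" for t
  proof -
    have t2: "t - 1 \<ge> 2" using t by simp
    have excess: "probCond \<beta> evenPos t - 1/4 = even_surv_mass (t - 1) / pi_norm"
      using probCond_eq[of "t - 1"] t by simp
    have "real t powr e \<le> real (t - 1) powr e" using t e by (intro powr_mono2') auto
    moreover have "1/180 * real (t - 1) powr e \<le> even_surv_mass (t - 1)" using low[OF t2] .
    ultimately have "1/180 * real t powr e \<le> even_surv_mass (t - 1)" by linarith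
    moreover have "real (t - 1) powr e \<le> 2 * real t powr e"
      using t e by (intro powr_le_mult_powr) auto
    hence "C * real (t - 1) powr e \<le> C * (2 * real t powr e)" using C0 by simp
    hence "even_surv_mass (t - 1) \<le> C * (2 * real t powr e)" using C[OF t2] by linarith
    ultimately show ?thesis using pi_norm_pos by (simp add: excess field_simps)
  qed
  thus ?thesis using C0 pi_norm_pos unfolding e_def
    by (intro exI[of _ "1/180 / pi_norm"] exI[of _ "2 * C / pi_norm"] conjI eventually_sequentiallyI[of 3])
      auto
qed

end

theorem mainTheorem8:
  fixes \<beta> :: real
  assumes "1 < \<beta>" and "\<beta> < 2"
  shows "probY0 \<beta> evenPos = 1/4
    \<and> (\<forall>\<^sub>F t in sequentially. probCond \<beta> evenPos t > 1/4)
    \<and> ((\<lambda>t. ln (probCond \<beta> evenPos t - 1/4) / ln (real t))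
          \<longlongrightarrow> (1 - \<beta>) / 2) sequentially
    \<and> (\<exists>C c. c > 0 \<and> (\<forall>t. probStay \<beta> evenPos t \<le> C * exp (- c * real t)))"
proof -
  interpret half_line_walk \<beta> using assms by unfold_locales
  obtain L U where LU: "L > 0" "U > 0" and bounds: "\<forall>\<^sub>F t in sequentially.
      L * real t powr ((1 - \<beta>) / 2) \<le> probCond \<beta> evenPos t - 1/4 \<and>
      probCond \<beta> evenPos t - 1/4 \<le> U * real t powr ((1 - \<beta>) / 2)"
    using probCond_excess_powr_bounds by blast
  have "\<forall>\<^sub>F t in sequentially. probCond \<beta> evenPos t > 1/4"
    using bounds eventually_ge_at_top[of 1]
  proof eventually_elim
    case (elim t)
    hence "0 < L * real t powr ((1 - \<beta>) / 2)" using LU by simp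
    thus ?case using elim by linarith
  qed
  thus ?thesis
    using probY0_eq probStay_le_exp ln_over_ln_tendsto_of_powr_bounds[OF LU bounds]
    by (intro conjI exI[of _ 1] exI[of _ "ln 2"]) auto
qed

end
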